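(* Consider the class of equations $$u_t+A(t)u_{xxxxx}+B(t)u_{xxx}+C(t)uu_{xxx}+E(t)uu_x+F(t)u_xu_{xx}+Q(t)u=0,\qquad (1)$$ regarded as a system together with the auxiliary conditions $A_x=A_u=B_x=B_u=C_x=C_u=E_x=E_u=F_x=F_u=Q_x=Q_u=0$ in the augmented space $(t,x,u,A,B,C,E,F,Q)$. The Lie algebra of infinitesimal equivalence transformations of this class, i.e. of vector fields $$Y=\tau\partial_t+\xi\partial_x+\eta\partial_u+\omega^1\partial_A+\omega^2\partial_B+\omega^3\partial_C+\omega^4\partial_E+\omega^5\partial_F+\omega^6\partial_Q,$$ with $\tau,\xi,\eta$ functions of $(t,x,u)$ and $\omega^i$ functions of $(t,x,u,A,B,C,E,F,Q)$, leaving this system invariant, is spanned by $$Y_1=x\partial_x+\tfrac12u\partial_u+5A\partial_A+3B\partial_B+\tfrac52C\partial_C+\tfrac12E\partial_E+\tfrac52F\partial_F,\qquad Y_2=\partial_x,$$ $$Y_\alpha=\alpha\partial_t-\alpha_tA\partial_A-\alpha_tB\partial_B-\alpha_tC\partial_C-\alpha_tE\partial_E-\alpha_tF\partial_F-\alpha_tQ\partial_Q,$$ $$Y_r=ru\partial_u-rC\partial_C-rE\partial_E-rF\partial_F-r_t\partial_Q,$$ where $\alpha=\alpha(t)$ and $r=r(t)$ are arbitrary smooth functions.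
   Context: $A,B,C,E,F,Q$ are smooth functions of $t$ only, with $A\neq0$ and $C\neq 0$. An equivalence transformation of the class (1) is a nondegenerate point transformation of $(t,x,u)$, extended to the arbitrary elements $A,\dots,Q$, which maps every equation of the class (1) to an equation of the same form (1) with possibly different coefficient functions; infinitesimal equivalence transformations are found by Lie's infinitesimal invariance criterion applied to (1) together with the auxiliary system stated in the claim. *)

theory Defs
  imports "HOL-Analysis.Analysis"
begin

fun Ck :: "nat \<Rightarrow> ('a::real_normed_vector \<Rightarrow> 'b::real_normed_vector) \<Rightarrow> bool" where
  "Ck 0 f = continuous_on UNIV f"
| "Ck (Suc k) f = (continuous_on UNIV f \<and> (\<forall>z. f differentiable (at z)) \<and>
      (\<forall>v. Ck k (\<lambda>z. frechet_derivative f (at z) v)))"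

definition smooth :: "('a::real_normed_vector \<Rightarrow> 'b::real_normed_vector) \<Rightarrow> bool" where
  "smooth f \<longleftrightarrow> (\<forall>k. Ck k f)"

definition pdt :: "(real \<Rightarrow> real \<Rightarrow> real) \<Rightarrow> real \<Rightarrow> real \<Rightarrow> real" where
  "pdt f t x = deriv (\<lambda>s. f s x) t"

definition pdx :: "(real \<Rightarrow> real \<Rightarrow> real) \<Rightarrow> real \<Rightarrow> real \<Rightarrow> real" where
  "pdx f t x = deriv (\<lambda>y. f t y) x"

definition pdxn :: "nat \<Rightarrow> (real \<Rightarrow> real \<Rightarrow> real) \<Rightarrow> real \<Rightarrow> real \<Rightarrow> real" where
  "pdxn n f = (pdx ^^ n) f"

type_synonym fun3 = "real \<Rightarrow> real \<Rightarrow> real \<Rightarrow> real"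
type_synonym fun9 = "real \<Rightarrow> real \<Rightarrow> real \<Rightarrow> real \<Rightarrow> real \<Rightarrow> real \<Rightarrow> real \<Rightarrow> real \<Rightarrow> real \<Rightarrow> real"

definition charW :: "fun3 \<Rightarrow> fun3 \<Rightarrow> fun3 \<Rightarrow> (real \<Rightarrow> real \<Rightarrow> real) \<Rightarrow> real \<Rightarrow> real \<Rightarrow> real" where
  "charW tau xi eta u = (\<lambda>t x. eta t x (u t x) - tau t x (u t x) * pdt u t x - xi t x (u t x) * pdx u t x)"

definition eta_t :: "fun3 \<Rightarrow> fun3 \<Rightarrow> fun3 \<Rightarrow> (real \<Rightarrow> real \<Rightarrow> real) \<Rightarrow> real \<Rightarrow> real \<Rightarrow> real" where
  "eta_t tau xi eta u t x = pdt (charW tau xi eta u) t x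
      + tau t x (u t x) * pdt (pdt u) t x + xi t x (u t x) * pdx (pdt u) t x"

definition eta_xn :: "nat \<Rightarrow> fun3 \<Rightarrow> fun3 \<Rightarrow> fun3 \<Rightarrow> (real \<Rightarrow> real \<Rightarrow> real) \<Rightarrow> real \<Rightarrow> real \<Rightarrow> real" where
  "eta_xn n tau xi eta u t x = pdxn n (charW tau xi eta u) t x
      + tau t x (u t x) * pdxn n (pdt u) t x + xi t x (u t x) * pdxn (Suc n) u t x"

definition eqn1 :: "(real \<Rightarrow> real) \<Rightarrow> (real \<Rightarrow> real) \<Rightarrow> (real \<Rightarrow> real) \<Rightarrow> (real \<Rightarrow> real) \<Rightarrow>
    (real \<Rightarrow> real) \<Rightarrow> (real \<Rightarrow> real) \<Rightarrow> (real \<Rightarrow> real \<Rightarrow> real) \<Rightarrow> real \<Rightarrow> real \<Rightarrow> real" where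
  "eqn1 A B C E F Q u t x =
     pdt u t x + A t * pdxn 5 u t x + B t * pdxn 3 u t x + C t * u t x * pdxn 3 u t x
     + E t * u t x * pdx u t x + F t * pdx u t x * pdxn 2 u t x + Q t * u t x"

text \<open>Action of the prolonged vector field on the left-hand side of (1), evaluated on the jet
  of u at (t,x), with arbitrary elements taking the values A t, ..., Q t.\<close>
definition prY_eqn1 :: "fun3 \<Rightarrow> fun3 \<Rightarrow> fun3 \<Rightarrow> fun9 \<Rightarrow> fun9 \<Rightarrow> fun9 \<Rightarrow> fun9 \<Rightarrow> fun9 \<Rightarrow> fun9 \<Rightarrow>
    (real \<Rightarrow> real) \<Rightarrow> (real \<Rightarrow> real) \<Rightarrow> (real \<Rightarrow> real) \<Rightarrow> (real \<Rightarrow> real) \<Rightarrow>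
    (real \<Rightarrow> real) \<Rightarrow> (real \<Rightarrow> real) \<Rightarrow> (real \<Rightarrow> real \<Rightarrow> real) \<Rightarrow> real \<Rightarrow> real \<Rightarrow> real" where
  "prY_eqn1 tau xi eta w1 w2 w3 w4 w5 w6 A B C E F Q u t x =
    (let U = u t x; u1 = pdx u t x; u2 = pdxn 2 u t x; u3 = pdxn 3 u t x; u5 = pdxn 5 u t x;
         ev = (\<lambda>w. w t x U (A t) (B t) (C t) (E t) (F t) (Q t));
         et = eta t x U in
     eta_t tau xi eta u t x
     + ev w1 * u5 + A t * eta_xn 5 tau xi eta u t x
     + ev w2 * u3 + B t * eta_xn 3 tau xi eta u t x
     + ev w3 * U * u3 + C t * et * u3 + C t * U * eta_xn 3 tau xi eta u t x
     + ev w4 * U * u1 + E t * et * u1 + E t * U * eta_xn 1 tau xi eta u t x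
     + ev w5 * u1 * u2 + F t * eta_xn 1 tau xi eta u t x * u2 + F t * u1 * eta_xn 2 tau xi eta u t x
     + ev w6 * U + Q t * et)"

text \<open>Prolongation coefficients of Y for the first derivatives theta_x, theta_u of an arbitrary
  element theta (the i-th one), evaluated at a point of the manifold of the auxiliary system,
  i.e. along arbitrary elements depending on t only:
  omega_{theta,z} = D_z omega - theta_t D_z tau - theta_x D_z xi - theta_u D_z eta, z in {x,u}.\<close>
definition om_x :: "fun3 \<Rightarrow> fun9 \<Rightarrow> (real \<Rightarrow> real) \<Rightarrow> (real \<Rightarrow> real) \<Rightarrow> (real \<Rightarrow> real) \<Rightarrow> (real \<Rightarrow> real) \<Rightarrow>
    (real \<Rightarrow> real) \<Rightarrow> (real \<Rightarrow> real) \<Rightarrow> (real \<Rightarrow> real) \<Rightarrow> real \<Rightarrow> real \<Rightarrow> real \<Rightarrow> real" where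
  "om_x tau w theta A B C E F Q t x u =
     deriv (\<lambda>y. w t y u (A t) (B t) (C t) (E t) (F t) (Q t)) x
     - deriv theta t * deriv (\<lambda>y. tau t y u) x"

definition om_u :: "fun3 \<Rightarrow> fun9 \<Rightarrow> (real \<Rightarrow> real) \<Rightarrow> (real \<Rightarrow> real) \<Rightarrow> (real \<Rightarrow> real) \<Rightarrow> (real \<Rightarrow> real) \<Rightarrow>
    (real \<Rightarrow> real) \<Rightarrow> (real \<Rightarrow> real) \<Rightarrow> (real \<Rightarrow> real) \<Rightarrow> real \<Rightarrow> real \<Rightarrow> real \<Rightarrow> real" where
  "om_u tau w theta A B C E F Q t x u =
     deriv (\<lambda>v. w t x v (A t) (B t) (C t) (E t) (F t) (Q t)) u
     - deriv theta t * deriv (\<lambda>v. tau t x v) u"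

text \<open>Lie's infinitesimal invariance criterion for the system (1) + auxiliary conditions,
  on the domain A \<noteq> 0, C \<noteq> 0 of the class.  Every jet point of the system is realised by
  smooth functions u(t,x) and A(t),...,Q(t), so the criterion is stated along such functions.\<close>
definition inf_equiv_transf :: "fun3 \<Rightarrow> fun3 \<Rightarrow> fun3 \<Rightarrow> fun9 \<Rightarrow> fun9 \<Rightarrow> fun9 \<Rightarrow> fun9 \<Rightarrow> fun9 \<Rightarrow> fun9 \<Rightarrow> bool" where
  "inf_equiv_transf tau xi eta w1 w2 w3 w4 w5 w6 \<longleftrightarrow>
    (\<forall>A B C E F Q. smooth A \<and> smooth B \<and> smooth C \<and> smooth E \<and> smooth F \<and> smooth Q \<longrightarrow>
      (\<forall>u t x. smooth (\<lambda>(p::real\<times>real). u (fst p) (snd p)) \<and> A t \<noteq> 0 \<and> C t \<noteq> 0 \<and>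
               eqn1 A B C E F Q u t x = 0 \<longrightarrow>
               prY_eqn1 tau xi eta w1 w2 w3 w4 w5 w6 A B C E F Q u t x = 0) \<and>
      (\<forall>t x u. A t \<noteq> 0 \<and> C t \<noteq> 0 \<longrightarrow>
         (\<forall>(w, theta) \<in> {(w1, A), (w2, B), (w3, C), (w4, E), (w5, F), (w6, Q)}.
            om_x tau w theta A B C E F Q t x u = 0 \<and> om_u tau w theta A B C E F Q t x u = 0)))"

end

theory Submission
  imports Defs
begin

text \<open>
  Sufficiency is a direct computation: for the displayed generators the prolonged vector field
  applied to (1) is a multiple of the left-hand side of (1), and the auxiliary conditions hold
  trivially.

  For necessity, the auxiliary conditions with constant arbitrary elements show that the
  \<open>\<omega>\<^sup>i\<close> do not depend on \<open>x, u\<close>, and with \<open>A = 1 + (s - t)\<close> that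
  \<open>\<tau>\<close> depends on \<open>t\<close> only. Every \<open>x\<close>-jet of order five, completed by the value
  of \<open>u\<^sub>t\<close> that (1) dictates, is realised by a polynomial in \<open>x\<close> plus a linear term in
  \<open>t\<close>, so the invariance criterion holds at arbitrary such jets and arbitrary constant values of
  the arbitrary elements. Comparing it for two values of \<open>B\<close>, \<open>F\<close> or \<open>E\<close> and over a
  few jets isolates \<open>\<xi>\<^sub>u = 0\<close>, \<open>\<eta>\<^sub>u\<^sub>u = 0\<close>, \<open>\<eta>(t,x,0) = 0\<close>,
  \<open>\<eta>\<^sub>x = 0\<close> and \<open>\<xi>\<^sub>x\<^sub>x = 0\<close>; the zero jet with \<open>u\<^sub>x = 1\<close> gives
  \<open>\<xi>\<^sub>t = 0\<close>. This fixes \<open>\<tau>, \<xi>, \<eta>\<close>, after which the criterion is linear in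
  the \<open>\<omega>\<^sup>i\<close> with independent jet monomials as coefficients, which determines them where
  \<open>A C \<noteq> 0\<close>, and everywhere by continuity.
\<close>

lemma Ck_SucD: "Ck (Suc k) f \<Longrightarrow> Ck k f"
proof (induction k arbitrary: f)
  case 0 thus ?case by simp
next
  case (Suc k) thus ?case by (metis Ck.simps(2))
qed

lemma smooth_continuous_on: "smooth f \<Longrightarrow> continuous_on UNIV f"
  by (metis Ck.simps(1) smooth_def)

lemma smooth_differentiable: "smooth f \<Longrightarrow> f differentiable (at z)"
  unfolding smooth_def by (metis Ck.simps(2) One_nat_def)

lemma smooth_has_derivative:
  "smooth f \<Longrightarrow> (f has_derivative frechet_derivative f (at z)) (at z)"
  using smooth_differentiable frechet_derivative_works by blast

lemma smooth_frechet_derivative: "smooth f \<Longrightarrow> smooth (\<lambda>z. frechet_derivative f (at z) v)"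
  unfolding smooth_def by (metis Ck.simps(2))

lemma Ck_const: "Ck k (\<lambda>z. c)"
  by (induction k arbitrary: c) auto

lemma smooth_const [simp]: "smooth (\<lambda>z. c)"
  by (simp add: smooth_def Ck_const)

lemma Ck_compose_affine:
  assumes L: "bounded_linear L"
  shows "Ck k f \<Longrightarrow> Ck k (\<lambda>z. f (L z + c))"
proof (induction k arbitrary: f)
  case 0
  have "continuous_on UNIV (\<lambda>z. L z + c)"
    by (intro continuous_intros linear_continuous_on L)
  moreover have "continuous_on UNIV f" using 0 by simp
  ultimately show ?case using continuous_on_compose2[of UNIV f UNIV "\<lambda>z. L z + c"] by auto
next
  case (Suc k)
  have cf: "continuous_on UNIV f" and df: "\<And>z. f differentiable (at z)"
    and Dk: "\<And>v. Ck k (\<lambda>z. frechet_derivative f (at z) v)" using Suc.prems by auto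
  have hd: "((\<lambda>z. f (L z + c)) has_derivative (\<lambda>h. frechet_derivative f (at (L z + c)) (L h))) (at z)" for z
  proof -
    have "((\<lambda>z. L z + c) has_derivative L) (at z)"
      using L by (auto intro!: derivative_eq_intros bounded_linear.has_derivative[OF L, of "\<lambda>x. x" "\<lambda>x. x"])
    moreover have "(f has_derivative frechet_derivative f (at (L z + c))) (at (L z + c))"
      using df frechet_derivative_works by blast
    ultimately show ?thesis using has_derivative_compose[of "\<lambda>z. L z + c" L z UNIV f] by auto
  qed
  have fd: "frechet_derivative (\<lambda>z. f (L z + c)) (at z) = (\<lambda>h. frechet_derivative f (at (L z + c)) (L h))" for z
    using hd frechet_derivative_at by metis
  have "continuous_on UNIV (\<lambda>z. f (L z + c))"
  proof -
    have "continuous_on UNIV (\<lambda>z. L z + c)"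
      by (intro continuous_intros linear_continuous_on L)
    thus ?thesis using cf continuous_on_compose2[of UNIV f UNIV "\<lambda>z. L z + c"] by auto
  qed
  moreover have "\<forall>z. (\<lambda>z. f (L z + c)) differentiable (at z)"
    using hd differentiable_def by blast
  moreover have "\<forall>v. Ck k (\<lambda>z. frechet_derivative (\<lambda>z. f (L z + c)) (at z) v)"
    unfolding fd using Suc.IH[OF Dk] by simp
  ultimately show ?case by simp
qed

lemma smooth_compose_affine: "bounded_linear L \<Longrightarrow> smooth f \<Longrightarrow> smooth (\<lambda>z. f (L z + c))"
  by (simp add: smooth_def Ck_compose_affine)

lemma Ck_ident: "Ck k (\<lambda>z. z)"
  by (induction k) (auto simp: Ck_const)

lemma smooth_ident [simp]: "smooth (\<lambda>z. z)"
  by (simp add: smooth_def Ck_ident)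

lemma smooth_bounded_linear: "bounded_linear L \<Longrightarrow> smooth L"
  using smooth_compose_affine[OF _ smooth_ident, of L 0] by simp

lemma Ck_add_mult:
  fixes f g :: "'a::real_normed_vector \<Rightarrow> real"
  shows "Ck k f \<Longrightarrow> Ck k g \<Longrightarrow> Ck k (\<lambda>z. f z + g z) \<and> Ck k (\<lambda>z. f z * g z)"
proof (induction k arbitrary: f g)
  case 0 thus ?case by (auto intro!: continuous_intros)
next
  case (Suc k)
  let ?f' = "\<lambda>z. frechet_derivative f (at z)" and ?g' = "\<lambda>z. frechet_derivative g (at z)"
  have f: "Ck k f" "\<And>v. Ck k (\<lambda>z. ?f' z v)" "\<And>z. (f has_derivative ?f' z) (at z)"
    and g: "Ck k g" "\<And>v. Ck k (\<lambda>z. ?g' z v)" "\<And>z. (g has_derivative ?g' z) (at z)"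
    using Suc.prems Ck_SucD by (simp_all flip: frechet_derivative_works)
  have add: "((\<lambda>z. f z + g z) has_derivative (\<lambda>h. ?f' z h + ?g' z h)) (at z)"
    and mult: "((\<lambda>z. f z * g z) has_derivative (\<lambda>h. f z * ?g' z h + ?f' z h * g z)) (at z)" for z
    using has_derivative_add[OF f(3) g(3)] has_derivative_mult[OF f(3) g(3)] by auto
  have "Ck k (\<lambda>z. frechet_derivative (\<lambda>z. f z + g z) (at z) v)" for v
    using Suc.IH[OF f(2)[of v] g(2)[of v]] by (simp add: frechet_derivative_at[OF add, symmetric])
  moreover have "Ck k (\<lambda>z. frechet_derivative (\<lambda>z. f z * g z) (at z) v)" for v
  proof -
    have "Ck k (\<lambda>z. f z * ?g' z v)" "Ck k (\<lambda>z. ?f' z v * g z)"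
      using Suc.IH[OF f(1) g(2)] Suc.IH[OF f(2) g(1)] by blast+
    thus ?thesis using Suc.IH by (simp add: frechet_derivative_at[OF mult, symmetric])
  qed
  moreover have "continuous_on UNIV (\<lambda>z. f z + g z)" "continuous_on UNIV (\<lambda>z. f z * g z)"
    using Suc.prems by (auto intro!: continuous_intros)
  moreover have "\<forall>z. (\<lambda>z. f z + g z) differentiable (at z)"
    "\<forall>z. (\<lambda>z. f z * g z) differentiable (at z)"
    using add mult differentiable_def by blast+
  ultimately show ?case by simp
qed

lemma smooth_add [intro]:
  fixes f g :: "'a::real_normed_vector \<Rightarrow> real"
  shows "smooth f \<Longrightarrow> smooth g \<Longrightarrow> smooth (\<lambda>z. f z + g z)"
  by (simp add: smooth_def Ck_add_mult)

lemma smooth_mult [intro]: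
  fixes f g :: "'a::real_normed_vector \<Rightarrow> real"
  shows "smooth f \<Longrightarrow> smooth g \<Longrightarrow> smooth (\<lambda>z. f z * g z)"
  by (simp add: smooth_def Ck_add_mult)

lemma smooth_diff [intro]:
  fixes f g :: "'a::real_normed_vector \<Rightarrow> real"
  assumes "smooth f" "smooth g" shows "smooth (\<lambda>z. f z - g z)"
  using smooth_add[OF assms(1) smooth_mult[OF smooth_const assms(2)], of "-1"] by simp

lemma smooth_power [intro]:
  fixes f :: "'a::real_normed_vector \<Rightarrow> real"
  shows "smooth f \<Longrightarrow> smooth (\<lambda>z. f z ^ n)"
  by (induction n) auto

lemma smooth_fst [simp]: "smooth fst" and smooth_snd [simp]: "smooth snd"
  by (simp_all add: smooth_bounded_linear bounded_linear_fst bounded_linear_snd)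

lemma smooth_compose_fst [intro]: "smooth h \<Longrightarrow> smooth (\<lambda>w. h (fst w))"
  using smooth_compose_affine[OF bounded_linear_fst, of h 0] by simp

lemma smooth_compose_snd [intro]: "smooth h \<Longrightarrow> smooth (\<lambda>w. h (snd w))"
  using smooth_compose_affine[OF bounded_linear_snd, of h 0] by simp

lemma smooth_DERIV: "smooth (h::real \<Rightarrow> real) \<Longrightarrow> (h has_real_derivative deriv h x) (at x within S)"
  using smooth_differentiable DERIV_deriv_iff_real_differentiable
    has_field_derivative_at_within by blast

lemma smooth_deriv: "smooth (h::real \<Rightarrow> real) \<Longrightarrow> smooth (deriv h)"
proof -
  assume h: "smooth h"
  have "frechet_derivative h (at x) 1 = deriv h x" for x
    using frechet_derivative_at[OF smooth_DERIV[OF h, unfolded has_field_derivative_def]]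
    by (metis mult.right_neutral)
  thus ?thesis using smooth_frechet_derivative[OF h, of 1] by simp
qed

section \<open>Partial derivatives in the plane\<close>

definition partial1 :: "(real \<times> real \<Rightarrow> real) \<Rightarrow> real \<times> real \<Rightarrow> real" where
  "partial1 F w = frechet_derivative F (at w) (1, 0)"

definition partial2 :: "(real \<times> real \<Rightarrow> real) \<Rightarrow> real \<times> real \<Rightarrow> real" where
  "partial2 F w = frechet_derivative F (at w) (0, 1)"

lemma smooth_partial1 [intro]: "smooth F \<Longrightarrow> smooth (partial1 F)"
  using smooth_frechet_derivative[of F "(1, 0)"] by (simp add: partial1_def[abs_def])

lemma smooth_partial2 [intro]: "smooth F \<Longrightarrow> smooth (partial2 F)"
  using smooth_frechet_derivative[of F "(0, 1)"] by (simp add: partial2_def[abs_def])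

lemma linear_on_pairs:
  fixes F' :: "real \<times> real \<Rightarrow> real"
  assumes "linear F'"
  shows "F' (a, b) = a * F' (1, 0) + b * F' (0, 1)"
proof -
  have "F' (a, b) = F' (a *\<^sub>R (1, 0) + b *\<^sub>R (0, 1))" by simp
  also have "\<dots> = a * F' (1, 0) + b * F' (0, 1)"
    by (simp only: real_vector.linear_add[OF assms] linear_cmul[OF assms] real_scaleR_def)
  finally show ?thesis .
qed

lemma partial_chain_rule:
  assumes F: "smooth F" and p: "(p has_real_derivative p') (at s)"
    and q: "(q has_real_derivative q') (at s)"
  shows "((\<lambda>s. F (p s, q s)) has_real_derivative
           partial1 F (p s, q s) * p' + partial2 F (p s, q s) * q') (at s)"
proof -
  let ?F' = "frechet_derivative F (at (p s, q s))"
  have hF: "(F has_derivative ?F') (at (p s, q s))" using smooth_has_derivative[OF F] .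
  have "((\<lambda>s. (p s, q s)) has_derivative (\<lambda>h. (p' * h, q' * h))) (at s)"
    using has_derivative_Pair[OF p[unfolded has_field_derivative_def] q[unfolded has_field_derivative_def]] .
  from has_derivative_compose[OF this hF]
  have "((\<lambda>s. F (p s, q s)) has_derivative (\<lambda>h. ?F' (p' * h, q' * h))) (at s)" .
  moreover have "(\<lambda>h. ?F' (p' * h, q' * h)) = (*) (partial1 F (p s, q s) * p' + partial2 F (p s, q s) * q')"
  proof
    fix h show "?F' (p' * h, q' * h) = (partial1 F (p s, q s) * p' + partial2 F (p s, q s) * q') * h"
      by (subst linear_on_pairs[OF has_derivative_linear[OF hF]])
        (simp add: partial1_def partial2_def algebra_simps)
  qed
  ultimately show ?thesis by (simp add: has_field_derivative_def)
qed

lemma has_real_derivative_partial1: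
  "smooth F \<Longrightarrow> ((\<lambda>s. F (s, b)) has_real_derivative partial1 F (s, b)) (at s)"
  using partial_chain_rule[of F "\<lambda>s. s" 1 s "\<lambda>_. b" 0] by (simp add: DERIV_ident)

lemma has_real_derivative_partial2:
  "smooth F \<Longrightarrow> ((\<lambda>y. F (a, y)) has_real_derivative partial2 F (a, y)) (at y)"
  using partial_chain_rule[of F "\<lambda>_. a" 0 y "\<lambda>y. y" 1] by (simp add: DERIV_ident)

lemma partial1_eq_deriv: "smooth F \<Longrightarrow> partial1 F (a, b) = deriv (\<lambda>s. F (s, b)) a"
  using has_real_derivative_partial1 DERIV_imp_deriv by metis

lemma partial2_eq_deriv: "smooth F \<Longrightarrow> partial2 F (a, b) = deriv (\<lambda>y. F (a, y)) b"
  using has_real_derivative_partial2 DERIV_imp_deriv by metis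

text \<open>Both mixed partials arise from applying the mean value theorem twice to the second
  difference of \<open>F\<close> over a square.\<close>
lemma mixed_partials_meet:
  assumes F: "smooth F" and h: "h > 0"
  shows "\<exists>s1 y1 s2 y2. t < s1 \<and> s1 < t + h \<and> x < y1 \<and> y1 < x + h \<and>
          t < s2 \<and> s2 < t + h \<and> x < y2 \<and> y2 < x + h \<and>
          partial2 (partial1 F) (s1, y1) = partial1 (partial2 F) (s2, y2)"
proof -
  define \<Delta> where "\<Delta> = F (t+h, x+h) - F (t+h, x) - F (t, x+h) + F (t, x)"
  have "\<exists>s1. t < s1 \<and> s1 < t + h \<and>
      (\<lambda>s. F (s, x+h) - F (s, x)) (t+h) - (\<lambda>s. F (s, x+h) - F (s, x)) t
        = (t + h - t) * (partial1 F (s1, x+h) - partial1 F (s1, x))"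
    by (rule MVT2) (use h in \<open>auto intro!: derivative_eq_intros has_real_derivative_partial1[OF F]\<close>)
  then obtain s1 where s1: "t < s1" "s1 < t + h"
    "\<Delta> = h * (partial1 F (s1, x+h) - partial1 F (s1, x))"
    unfolding \<Delta>_def by auto
  have "\<exists>y1. x < y1 \<and> y1 < x + h \<and>
      partial1 F (s1, x+h) - partial1 F (s1, x) = (x + h - x) * partial2 (partial1 F) (s1, y1)"
    by (rule MVT2) (use h in \<open>auto intro!: has_real_derivative_partial2 smooth_partial1 F\<close>)
  then obtain y1 where y1: "x < y1" "y1 < x + h"
    "partial1 F (s1, x+h) - partial1 F (s1, x) = h * partial2 (partial1 F) (s1, y1)"
    by auto
  have "\<exists>y2. x < y2 \<and> y2 < x + h \<and>
      (\<lambda>y. F (t+h, y) - F (t, y)) (x+h) - (\<lambda>y. F (t+h, y) - F (t, y)) x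
        = (x + h - x) * (partial2 F (t+h, y2) - partial2 F (t, y2))"
    by (rule MVT2) (use h in \<open>auto intro!: derivative_eq_intros has_real_derivative_partial2[OF F]\<close>)
  then obtain y2 where y2: "x < y2" "y2 < x + h"
    "\<Delta> = h * (partial2 F (t+h, y2) - partial2 F (t, y2))"
    unfolding \<Delta>_def by (auto simp: algebra_simps)
  have "\<exists>s2. t < s2 \<and> s2 < t + h \<and>
      partial2 F (t+h, y2) - partial2 F (t, y2) = (t + h - t) * partial1 (partial2 F) (s2, y2)"
    by (rule MVT2) (use h in \<open>auto intro!: has_real_derivative_partial1 smooth_partial2 F\<close>)
  then obtain s2 where s2: "t < s2" "s2 < t + h"
    "partial2 F (t+h, y2) - partial2 F (t, y2) = h * partial1 (partial2 F) (s2, y2)"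
    by auto
  have "h * (h * partial2 (partial1 F) (s1, y1)) = h * (h * partial1 (partial2 F) (s2, y2))"
    using s1(3) y1(3) y2(3) s2(3) by auto
  hence "partial2 (partial1 F) (s1, y1) = partial1 (partial2 F) (s2, y2)" using h by simp
  thus ?thesis using s1 y1 s2 y2 by blast
qed

lemma dist_pair_le: "dist (a::real, b::real) (c, d) \<le> dist a c + dist b d"
  unfolding dist_norm by (metis norm_Pair_le diff_Pair)

lemma partial_commute:
  assumes F: "smooth F"
  shows "partial1 (partial2 F) w = partial2 (partial1 F) w"
proof (rule ccontr)
  let ?D12 = "partial1 (partial2 F)" and ?D21 = "partial2 (partial1 F)"
  assume ne: "?D12 w \<noteq> ?D21 w"
  obtain t x where w: "w = (t, x)" by (cases w)
  define e where "e = \<bar>?D12 w - ?D21 w\<bar> / 2"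
  have e: "e > 0" using ne by (simp add: e_def)
  have "continuous (at w) ?D12" "continuous (at w) ?D21"
    using smooth_continuous_on[OF smooth_partial1[OF smooth_partial2[OF F]]]
      smooth_continuous_on[OF smooth_partial2[OF smooth_partial1[OF F]]]
    by (simp_all add: continuous_on_eq_continuous_at del: split_paired_All)
  then obtain d1 d2 where d1: "d1 > 0" "\<And>z. dist z w < d1 \<Longrightarrow> dist (?D12 z) (?D12 w) < e"
    and d2: "d2 > 0" "\<And>z. dist z w < d2 \<Longrightarrow> dist (?D21 z) (?D21 w) < e"
    using e unfolding continuous_at_eps_delta by metis
  define h where "h = min d1 d2 / 2"
  have h: "h > 0" using d1 d2 by (simp add: h_def)
  obtain s1 y1 s2 y2 where r: "t < s1" "s1 < t + h" "x < y1" "y1 < x + h"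
    "t < s2" "s2 < t + h" "x < y2" "y2 < x + h" "?D21 (s1, y1) = ?D12 (s2, y2)"
    using mixed_partials_meet[OF F h, of t x] by blast
  have "dist (s1, y1) w < min d1 d2" "dist (s2, y2) w < min d1 d2"
    using dist_pair_le[of s1 y1 t x] dist_pair_le[of s2 y2 t x] r w
    by (simp_all add: dist_real_def h_def min_def split: if_splits)
  hence "\<bar>?D21 (s1, y1) - ?D21 w\<bar> < e" "\<bar>?D12 (s2, y2) - ?D12 w\<bar> < e"
    using d1 d2 by (auto simp: dist_real_def)
  with r(9) show False by (simp add: e_def abs_if split: if_splits)
qed

lemma frechet_derivative_add:
  fixes f g :: "'a::real_normed_vector \<Rightarrow> real"
  assumes "smooth f" "smooth g"
  shows "frechet_derivative (\<lambda>w. f w + g w) (at z) v =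
    frechet_derivative f (at z) v + frechet_derivative g (at z) v"
  using frechet_derivative_at[OF has_derivative_add[OF smooth_has_derivative[OF assms(1)]
      smooth_has_derivative[OF assms(2)]], symmetric]
  by simp

lemma frechet_derivative_mult:
  fixes f g :: "'a::real_normed_vector \<Rightarrow> real"
  assumes "smooth f" "smooth g"
  shows "frechet_derivative (\<lambda>w. f w * g w) (at z) v =
    f z * frechet_derivative g (at z) v + frechet_derivative f (at z) v * g z"
  using frechet_derivative_at[OF has_derivative_mult[OF smooth_has_derivative[OF assms(1)]
      smooth_has_derivative[OF assms(2)]], symmetric]
  by simp

lemma frechet_derivative_diff:
  fixes f g :: "'a::real_normed_vector \<Rightarrow> real"
  assumes "smooth f" "smooth g"
  shows "frechet_derivative (\<lambda>w. f w - g w) (at z) v =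
    frechet_derivative f (at z) v - frechet_derivative g (at z) v"
  using frechet_derivative_at[OF has_derivative_diff[OF smooth_has_derivative[OF assms(1)]
      smooth_has_derivative[OF assms(2)]], symmetric]
  by simp

lemma frechet_derivative_compose_fst:
  assumes "smooth (h::real \<Rightarrow> real)"
  shows "frechet_derivative (\<lambda>w::real \<times> real. h (fst w)) (at z) v = deriv h (fst z) * fst v"
proof -
  have "(h has_derivative (*) (deriv h (fst z))) (at (fst z))"
    using smooth_DERIV[OF assms] by (simp add: has_field_derivative_def)
  from has_derivative_compose[OF has_derivative_fst[OF has_derivative_ident] this]
  have "((\<lambda>w. h (fst w)) has_derivative (\<lambda>v. deriv h (fst z) * fst v)) (at z)" by simp
  thus ?thesis by (metis frechet_derivative_at)
qed

lemma frechet_derivative_bounded_linear: "bounded_linear L \<Longrightarrow> frechet_derivative L (at z) = L"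
  by (metis bounded_linear_imp_has_derivative frechet_derivative_at)

lemma partial_add [simp]:
  "smooth f \<Longrightarrow> smooth g \<Longrightarrow> partial1 (\<lambda>w. f w + g w) = (\<lambda>w. partial1 f w + partial1 g w)"
  "smooth f \<Longrightarrow> smooth g \<Longrightarrow> partial2 (\<lambda>w. f w + g w) = (\<lambda>w. partial2 f w + partial2 g w)"
  by (simp_all add: fun_eq_iff partial1_def partial2_def frechet_derivative_add)

lemma partial_diff [simp]:
  "smooth f \<Longrightarrow> smooth g \<Longrightarrow> partial1 (\<lambda>w. f w - g w) = (\<lambda>w. partial1 f w - partial1 g w)"
  "smooth f \<Longrightarrow> smooth g \<Longrightarrow> partial2 (\<lambda>w. f w - g w) = (\<lambda>w. partial2 f w - partial2 g w)"
  by (simp_all add: fun_eq_iff partial1_def partial2_def frechet_derivative_diff)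

lemma partial_mult [simp]:
  "smooth f \<Longrightarrow> smooth g \<Longrightarrow>
     partial1 (\<lambda>w. f w * g w) = (\<lambda>w. f w * partial1 g w + partial1 f w * g w)"
  "smooth f \<Longrightarrow> smooth g \<Longrightarrow>
     partial2 (\<lambda>w. f w * g w) = (\<lambda>w. f w * partial2 g w + partial2 f w * g w)"
  by (simp_all add: fun_eq_iff partial1_def partial2_def frechet_derivative_mult)

lemma partial_const [simp]: "partial1 (\<lambda>w. c) = (\<lambda>w. 0)" "partial2 (\<lambda>w. c) = (\<lambda>w. 0)"
  by (simp_all add: partial1_def[abs_def] partial2_def[abs_def])

lemma partial_compose_fst [simp]:
  "smooth h \<Longrightarrow> partial1 (\<lambda>w. h (fst w)) = (\<lambda>w. deriv h (fst w))"
  "smooth h \<Longrightarrow> partial2 (\<lambda>w. h (fst w)) = (\<lambda>w. 0)"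
  by (simp_all add: fun_eq_iff partial1_def partial2_def frechet_derivative_compose_fst)

lemma partial_fst_snd [simp]:
  "partial1 fst = (\<lambda>w. 1)" "partial2 fst = (\<lambda>w. 0)"
  "partial1 snd = (\<lambda>w. 0)" "partial2 snd = (\<lambda>w. 1)"
  by (simp_all add: fun_eq_iff partial1_def partial2_def frechet_derivative_bounded_linear
      bounded_linear_fst bounded_linear_snd)

definition deriv_along_graph :: "(real \<Rightarrow> real) \<Rightarrow> (real \<times> real \<Rightarrow> real) \<Rightarrow> real \<times> real \<Rightarrow> real" where
  "deriv_along_graph P' K = (\<lambda>w. partial1 K w + partial2 K w * P' (fst w))"

lemma smooth_deriv_along_graph [intro]: "smooth P' \<Longrightarrow> smooth K \<Longrightarrow> smooth (deriv_along_graph P' K)"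
  unfolding deriv_along_graph_def
  by (intro smooth_add smooth_mult smooth_partial1 smooth_partial2 smooth_compose_fst)

lemma higher_deriv_along_graph:
  assumes K: "smooth K" and P': "smooth P'" and P: "\<And>y. (P has_real_derivative P' y) (at y)"
  shows "(deriv ^^ n) (\<lambda>y. K (y, P y)) = (\<lambda>y. (deriv_along_graph P' ^^ n) K (y, P y))"
proof (induction n)
  case 0 thus ?case by simp
next
  case (Suc n)
  have "smooth ((deriv_along_graph P' ^^ n) K)" by (induction n) (auto simp: K P')
  from partial_chain_rule[OF this DERIV_ident P]
  have "deriv (\<lambda>y. (deriv_along_graph P' ^^ n) K (y, P y)) y
          = (deriv_along_graph P' ^^ Suc n) K (y, P y)" for y
    by (simp add: DERIV_imp_deriv deriv_along_graph_def)
  with Suc show ?case by auto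
qed

lemma pdt_eq_partial1: "smooth (case_prod u) \<Longrightarrow> pdt u t x = partial1 (case_prod u) (t, x)"
  using partial1_eq_deriv[of "case_prod u" t x] by (simp add: pdt_def)

lemma pdx_eq_partial2: "smooth (case_prod u) \<Longrightarrow> pdx u t x = partial2 (case_prod u) (t, x)"
  using partial2_eq_deriv[of "case_prod u" t x] by (simp add: pdx_def)

lemma case_prod_pdt: "smooth (case_prod u) \<Longrightarrow> case_prod (pdt u) = partial1 (case_prod u)"
  by (simp add: fun_eq_iff pdt_eq_partial1 split: prod.split)

lemma case_prod_pdx: "smooth (case_prod u) \<Longrightarrow> case_prod (pdx u) = partial2 (case_prod u)"
  by (simp add: fun_eq_iff pdx_eq_partial2 split: prod.split)

lemma smooth_pdt [intro]: "smooth (case_prod u) \<Longrightarrow> smooth (case_prod (pdt u))"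
  by (simp add: case_prod_pdt smooth_partial1)

lemma smooth_pdx [intro]: "smooth (case_prod u) \<Longrightarrow> smooth (case_prod (pdx u))"
  by (simp add: case_prod_pdx smooth_partial2)

lemma has_real_derivative_pdt:
  "smooth (case_prod u) \<Longrightarrow> ((\<lambda>s. u s x) has_real_derivative pdt u t x) (at t within S)"
  using has_real_derivative_partial1[of "case_prod u" x t]
  by (simp add: pdt_eq_partial1 has_field_derivative_at_within)

lemma has_real_derivative_pdx:
  "smooth (case_prod u) \<Longrightarrow> ((\<lambda>y. u t y) has_real_derivative pdx u t x) (at x within S)"
  using has_real_derivative_partial2[of "case_prod u" t x]
  by (simp add: pdx_eq_partial2 has_field_derivative_at_within)

lemma pdt_pdx_commute:
  assumes u: "smooth (case_prod u)" shows "pdt (pdx u) t x = pdx (pdt u) t x"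
proof -
  have "pdt (pdx u) t x = partial1 (partial2 (case_prod u)) (t, x)"
    using pdt_eq_partial1[OF smooth_pdx[OF u]] by (simp add: case_prod_pdx[OF u])
  also have "\<dots> = partial2 (partial1 (case_prod u)) (t, x)"
    by (rule partial_commute[OF u])
  also have "\<dots> = pdx (pdt u) t x"
    using pdx_eq_partial2[OF smooth_pdt[OF u]] by (simp add: case_prod_pdt[OF u])
  finally show ?thesis .
qed

lemma pdxn_0 [simp]: "pdxn 0 f = f"
  by (simp add: pdxn_def)

lemma pdxn_Suc: "pdxn (Suc n) f = pdx (pdxn n f)"
  by (simp add: pdxn_def)

lemma pdxn_1 [simp]: "pdxn (Suc 0) f = pdx f"
  by (simp add: pdxn_Suc)

lemma pdxn_pdx: "pdxn n (pdx u) = pdxn (Suc n) u"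
  by (simp add: pdxn_def funpow_Suc_right del: funpow.simps)

lemma pdxn_eq_deriv: "pdxn n f t x = (deriv ^^ n) (\<lambda>y. f t y) x"
proof (induction n arbitrary: x)
  case 0 thus ?case by simp
next
  case (Suc n)
  have "pdxn (Suc n) f t x = deriv (\<lambda>y. pdxn n f t y) x" by (simp add: pdxn_Suc pdx_def)
  also have "(\<lambda>y. pdxn n f t y) = (deriv ^^ n) (\<lambda>y. f t y)" using Suc by auto
  finally show ?case by simp
qed

lemma smooth_pdxn [intro]: "smooth (case_prod u) \<Longrightarrow> smooth (case_prod (pdxn n u))"
  by (induction n) (auto simp: pdxn_Suc)

lemma pdxn_affine_combination:
  fixes f g h :: "real \<Rightarrow> real \<Rightarrow> real" and a b :: "real \<Rightarrow> real"
  assumes sf: "smooth (case_prod f)" and sg: "smooth (case_prod g)" and sh: "smooth (case_prod h)"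
  shows "pdxn n (\<lambda>t x. a t * f t x + b t * g t x - (c1 * x + c2) * h t x) =
    (\<lambda>t x. a t * pdxn n f t x + b t * pdxn n g t x
       - ((c1 * x + c2) * pdxn n h t x + real n * c1 * pdxn (n - 1) h t x))"
proof (induction n)
  case 0 show ?case by simp
next
  case (Suc n)
  show ?case
  proof (rule ext, rule ext)
    fix t x
    let ?g = "\<lambda>y. a t * pdxn n f t y + b t * pdxn n g t y
      - ((c1 * y + c2) * pdxn n h t y + real n * c1 * pdxn (n - 1) h t y)"
    have d: "(?g has_real_derivative a t * pdx (pdxn n f) t x + b t * pdx (pdxn n g) t x
        - (c1 * pdxn n h t x + (c1 * x + c2) * pdx (pdxn n h) t x
           + real n * c1 * pdx (pdxn (n - 1) h) t x)) (at x)"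
      (is "(_ has_real_derivative ?D) _")
      by (auto intro!: derivative_eq_intros has_real_derivative_pdx smooth_pdxn sf sg sh)
    have e: "real n * c1 * pdx (pdxn (n - 1) h) t x = real n * c1 * pdxn n h t x"
      by (cases n) (auto simp: pdxn_Suc)
    have "pdxn (Suc n) (\<lambda>t x. a t * f t x + b t * g t x - (c1 * x + c2) * h t x) t x = deriv ?g x"
      unfolding pdxn_Suc Suc.IH pdx_def by simp
    also have "\<dots> = ?D"
      by (rule DERIV_imp_deriv[OF d])
    also have "\<dots> = a t * pdxn (Suc n) f t x + b t * pdxn (Suc n) g t x
        - ((c1 * x + c2) * pdxn (Suc n) h t x + real (Suc n) * c1 * pdxn (Suc n - 1) h t x)"
      unfolding e by (simp add: pdxn_Suc algebra_simps)
    finally show "pdxn (Suc n) (\<lambda>t x. a t * f t x + b t * g t x - (c1 * x + c2) * h t x) t x =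
        a t * pdxn (Suc n) f t x + b t * pdxn (Suc n) g t x
        - ((c1 * x + c2) * pdxn (Suc n) h t x + real (Suc n) * c1 * pdxn (Suc n - 1) h t x)" .
  qed
qed

section \<open>Prolongation of the claimed generators\<close>

locale generator_point_form =
  fixes \<alpha> r :: "real \<Rightarrow> real" and c1 c2 :: real
    and tau xi eta :: "real \<Rightarrow> real \<Rightarrow> real \<Rightarrow> real"
  assumes smooth_\<alpha>: "smooth \<alpha>" and smooth_r: "smooth r"
    and tau: "\<And>t x u. tau t x u = \<alpha> t"
    and xi: "\<And>t x u. xi t x u = c1 * x + c2"
    and eta: "\<And>t x u. eta t x u = c1 / 2 * u + r t * u"
begin

lemma charW_eq:
  "charW tau xi eta u = (\<lambda>t x. (c1/2 + r t) * u t x + (- \<alpha> t) * pdt u t x - (c1 * x + c2) * pdx u t x)"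
  by (auto simp: charW_def tau xi eta algebra_simps)

lemma eta_xn_eq:
  assumes su: "smooth (case_prod u)" and n: "n \<ge> 1"
  shows "eta_xn n tau xi eta u t x = (c1/2 + r t - real n * c1) * pdxn n u t x"
proof -
  have "pdxn (n - 1) (pdx u) = pdxn n u" using n by (simp add: pdxn_pdx)
  thus ?thesis unfolding eta_xn_def charW_eq
      pdxn_affine_combination[OF su smooth_pdt[OF su] smooth_pdx[OF su],
        where a="\<lambda>t. c1/2 + r t" and b="\<lambda>t. - \<alpha> t"]
    by (simp add: tau xi pdxn_pdx algebra_simps)
qed

lemma eta_t_eq:
  assumes su: "smooth (case_prod u)"
  shows "eta_t tau xi eta u t x = deriv r t * u t x + (c1/2 + r t - deriv \<alpha> t) * pdt u t x"
proof -
  have d: "((\<lambda>s. (c1/2 + r s) * u s x + (- \<alpha> s) * pdt u s x - (c1 * x + c2) * pdx u s x)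
    has_real_derivative deriv r t * u t x + (c1/2 + r t) * pdt u t x + (- deriv \<alpha> t) * pdt u t x
      + (- \<alpha> t) * pdt (pdt u) t x - (c1 * x + c2) * pdt (pdx u) t x) (at t)"
    by (auto intro!: derivative_eq_intros has_real_derivative_pdt smooth_DERIV smooth_\<alpha> smooth_r su
        smooth_pdt smooth_pdx)
  show ?thesis
    unfolding eta_t_def charW_eq pdt_def[of "\<lambda>t x. _", abs_def]
    using DERIV_imp_deriv[OF d] pdt_pdx_commute[OF su, of t x]
    by (simp add: tau xi pdt_def algebra_simps)
qed

lemma prY_eqn1_eq:
  assumes su: "smooth (case_prod u)"
  shows "prY_eqn1 tau xi eta w1 w2 w3 w4 w5 w6 A B C E F Q u t x =
    (c1/2 + r t - deriv \<alpha> t) * eqn1 A B C E F Q u t x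
    + (w1 t x (u t x) (A t) (B t) (C t) (E t) (F t) (Q t) - (5 * c1 * A t - deriv \<alpha> t * A t)) * pdxn 5 u t x
    + (w2 t x (u t x) (A t) (B t) (C t) (E t) (F t) (Q t) - (3 * c1 * B t - deriv \<alpha> t * B t)) * pdxn 3 u t x
    + (w3 t x (u t x) (A t) (B t) (C t) (E t) (F t) (Q t) - (5 / 2 * c1 * C t - deriv \<alpha> t * C t - r t * C t))
        * u t x * pdxn 3 u t x
    + (w4 t x (u t x) (A t) (B t) (C t) (E t) (F t) (Q t) - (c1 / 2 * E t - deriv \<alpha> t * E t - r t * E t))
        * u t x * pdx u t x
    + (w5 t x (u t x) (A t) (B t) (C t) (E t) (F t) (Q t) - (5 / 2 * c1 * F t - deriv \<alpha> t * F t - r t * F t))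
        * pdx u t x * pdxn 2 u t x
    + (w6 t x (u t x) (A t) (B t) (C t) (E t) (F t) (Q t) - (- deriv \<alpha> t * Q t - deriv r t)) * u t x"
proof -
  have e1: "eta_xn 1 tau xi eta u t x = (c1/2 + r t - c1) * pdx u t x"
    using eta_xn_eq[OF su, of 1] by simp
  have e2: "eta_xn 2 tau xi eta u t x = (c1/2 + r t - 2 * c1) * pdxn 2 u t x"
    using eta_xn_eq[OF su, of 2] by simp
  have e3: "eta_xn 3 tau xi eta u t x = (c1/2 + r t - 3 * c1) * pdxn 3 u t x"
    using eta_xn_eq[OF su, of 3] by simp
  have e5: "eta_xn 5 tau xi eta u t x = (c1/2 + r t - 5 * c1) * pdxn 5 u t x"
    using eta_xn_eq[OF su, of 5] by simp
  show ?thesis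
    unfolding prY_eqn1_def Let_def e1 e2 e3 e5 eta_t_eq[OF su] eqn1_def eta
    by (simp add: algebra_simps)
qed

lemma inf_equiv_transfI:
  assumes "\<And>t x u A B C E F Q. w1 t x u A B C E F Q = 5 * c1 * A - deriv \<alpha> t * A"
    and "\<And>t x u A B C E F Q. w2 t x u A B C E F Q = 3 * c1 * B - deriv \<alpha> t * B"
    and "\<And>t x u A B C E F Q. w3 t x u A B C E F Q = 5 / 2 * c1 * C - deriv \<alpha> t * C - r t * C"
    and "\<And>t x u A B C E F Q. w4 t x u A B C E F Q = c1 / 2 * E - deriv \<alpha> t * E - r t * E"
    and "\<And>t x u A B C E F Q. w5 t x u A B C E F Q = 5 / 2 * c1 * F - deriv \<alpha> t * F - r t * F"
    and "\<And>t x u A B C E F Q. w6 t x u A B C E F Q = - deriv \<alpha> t * Q - deriv r t"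
  shows "inf_equiv_transf tau xi eta w1 w2 w3 w4 w5 w6"
  unfolding inf_equiv_transf_def
proof (intro allI impI conjI)
  fix A B C E F Q u t x
  assume "smooth (\<lambda>p :: real \<times> real. u (fst p) (snd p)) \<and> A t \<noteq> 0 \<and> C t \<noteq> 0 \<and>
    eqn1 A B C E F Q u t x = 0"
  then show "prY_eqn1 tau xi eta w1 w2 w3 w4 w5 w6 A B C E F Q u t x = 0"
    by (simp add: prY_eqn1_eq case_prod_beta' assms)
qed (simp_all add: om_x_def om_u_def tau assms)

end

text \<open>The coefficients of \<open>c1 Y\<^sub>1 + c2 Y\<^sub>2 + Y\<^sub>\<alpha> + Y\<^sub>r\<close>.\<close>
definition equivalence_generator_form :: "fun3 \<Rightarrow> fun3 \<Rightarrow> fun3 \<Rightarrow> fun9 \<Rightarrow> fun9 \<Rightarrow> fun9 \<Rightarrow> fun9 \<Rightarrow>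
    fun9 \<Rightarrow> fun9 \<Rightarrow> real \<Rightarrow> real \<Rightarrow> (real \<Rightarrow> real) \<Rightarrow> (real \<Rightarrow> real) \<Rightarrow> bool" where
  "equivalence_generator_form tau xi eta w1 w2 w3 w4 w5 w6 c1 c2 \<alpha> r \<longleftrightarrow> smooth \<alpha> \<and> smooth r \<and>
     (\<forall>t x u A B C E F Q.
        tau t x u = \<alpha> t \<and>
        xi t x u = c1 * x + c2 \<and>
        eta t x u = c1 / 2 * u + r t * u \<and>
        w1 t x u A B C E F Q = 5 * c1 * A - deriv \<alpha> t * A \<and>
        w2 t x u A B C E F Q = 3 * c1 * B - deriv \<alpha> t * B \<and>
        w3 t x u A B C E F Q = 5 / 2 * c1 * C - deriv \<alpha> t * C - r t * C \<and>
        w4 t x u A B C E F Q = c1 / 2 * E - deriv \<alpha> t * E - r t * E \<and>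
        w5 t x u A B C E F Q = 5 / 2 * c1 * F - deriv \<alpha> t * F - r t * F \<and>
        w6 t x u A B C E F Q = - deriv \<alpha> t * Q - deriv r t)"

lemma inf_equiv_transf_if_generator_form:
  assumes "equivalence_generator_form tau xi eta w1 w2 w3 w4 w5 w6 c1 c2 \<alpha> r"
  shows "inf_equiv_transf tau xi eta w1 w2 w3 w4 w5 w6"
proof -
  interpret generator_point_form \<alpha> r c1 c2 tau xi eta
    using assms by unfold_locales (simp_all add: equivalence_generator_form_def)
  show ?thesis
    using assms by (intro inf_equiv_transfI) (simp_all add: equivalence_generator_form_def)
qed

section \<open>Functions realising a prescribed jet\<close>

definition taylor5 :: "real \<Rightarrow> real \<Rightarrow> real \<Rightarrow> real \<Rightarrow> real \<Rightarrow> real \<Rightarrow> real \<Rightarrow> real \<Rightarrow> real" where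
  "taylor5 x0 a0 a1 a2 a3 a4 a5 y = a0 + a1 * (y - x0) + a2 * (y - x0)^2 / 2 + a3 * (y - x0)^3 / 6
     + a4 * (y - x0)^4 / 24 + a5 * (y - x0)^5 / 120"

lemma taylor5_at [simp]: "taylor5 x0 a0 a1 a2 a3 a4 a5 x0 = a0"
  by (simp add: taylor5_def)

lemma taylor5_const [simp]: "taylor5 x0 a0 0 0 0 0 0 y = a0"
  by (simp add: taylor5_def)

lemma has_real_derivative_taylor5:
  "(taylor5 x0 a0 a1 a2 a3 a4 a5 has_real_derivative taylor5 x0 a1 a2 a3 a4 a5 0 y) (at y within S)"
  unfolding taylor5_def[abs_def] taylor5_def
  by (auto intro!: derivative_eq_intros simp: field_simps power2_eq_square power3_eq_cube
      power4_eq_xxxx power_Suc)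

lemma deriv_taylor5 [simp]: "deriv (taylor5 x0 a0 a1 a2 a3 a4 a5) = taylor5 x0 a1 a2 a3 a4 a5 0"
  using has_real_derivative_taylor5 DERIV_imp_deriv by blast

lemma smooth_taylor5 [intro]: "smooth (taylor5 x0 a0 a1 a2 a3 a4 a5)"
  unfolding taylor5_def[abs_def] divide_inverse
  by (intro smooth_add smooth_mult smooth_power smooth_diff smooth_const smooth_ident)

text \<open>At \<open>(t0, x0)\<close> this function has \<open>u = a0\<close>, \<open>u\<^sub>t = v\<close> and
  \<open>\<partial>\<^sub>x\<^sup>k u = a\<^sub>k\<close>; choosing \<open>v\<close> makes it satisfy (1) there for any prescribed
  \<open>x\<close>-jet.\<close>
definition jet_realization ::
    "real \<Rightarrow> real \<Rightarrow> real \<Rightarrow> real \<Rightarrow> real \<Rightarrow> real \<Rightarrow> real \<Rightarrow> real \<Rightarrow> real \<Rightarrow> real \<Rightarrow> real \<Rightarrow> real" where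
  "jet_realization t0 x0 v a0 a1 a2 a3 a4 a5 t y = taylor5 x0 a0 a1 a2 a3 a4 a5 y + v * (t - t0)"

lemma smooth_jet_realization [intro]: "smooth (case_prod (jet_realization t0 x0 v a0 a1 a2 a3 a4 a5))"
proof -
  have "smooth (\<lambda>p :: real \<times> real. taylor5 x0 a0 a1 a2 a3 a4 a5 (snd p) + v * (fst p - t0))"
    by (intro smooth_add smooth_mult smooth_diff smooth_const smooth_fst smooth_compose_snd smooth_taylor5)
  thus ?thesis by (simp add: case_prod_beta' jet_realization_def[abs_def])
qed

lemma pdx_jet_realization [simp]:
  "pdx (jet_realization t0 x0 v a0 a1 a2 a3 a4 a5) = jet_realization t0 x0 0 a1 a2 a3 a4 a5 0"
proof (intro ext)
  fix t x
  have "((\<lambda>y. jet_realization t0 x0 v a0 a1 a2 a3 a4 a5 t y) has_real_derivative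
          taylor5 x0 a1 a2 a3 a4 a5 0 x) (at x)"
    unfolding jet_realization_def by (auto intro!: derivative_eq_intros has_real_derivative_taylor5)
  thus "pdx (jet_realization t0 x0 v a0 a1 a2 a3 a4 a5) t x = jet_realization t0 x0 0 a1 a2 a3 a4 a5 0 t x"
    using DERIV_imp_deriv by (fastforce simp: pdx_def jet_realization_def)
qed

lemma pdt_jet_realization [simp]:
  "pdt (jet_realization t0 x0 v a0 a1 a2 a3 a4 a5) = jet_realization t0 x0 0 v 0 0 0 0 0"
proof (intro ext)
  fix t x
  have "((\<lambda>s. jet_realization t0 x0 v a0 a1 a2 a3 a4 a5 s x) has_real_derivative v) (at t)"
    unfolding jet_realization_def by (auto intro!: derivative_eq_intros)
  thus "pdt (jet_realization t0 x0 v a0 a1 a2 a3 a4 a5) t x = jet_realization t0 x0 0 v 0 0 0 0 0 t x"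
    using DERIV_imp_deriv by (fastforce simp: pdt_def jet_realization_def)
qed

lemma jet_realization_at [simp]: "jet_realization t0 x0 v a0 a1 a2 a3 a4 a5 t0 x0 = a0"
  by (simp add: jet_realization_def)

lemma pdxn_jet_realization:
  "pdxn 2 (jet_realization t0 x0 v a0 a1 a2 a3 a4 a5) = jet_realization t0 x0 0 a2 a3 a4 a5 0 0"
  "pdxn 3 (jet_realization t0 x0 v a0 a1 a2 a3 a4 a5) = jet_realization t0 x0 0 a3 a4 a5 0 0 0"
  "pdxn 5 (jet_realization t0 x0 v a0 a1 a2 a3 a4 a5) = jet_realization t0 x0 0 a5 0 0 0 0 0"
  "pdxn (Suc n) (jet_realization t0 x0 0 v 0 0 0 0 0) = jet_realization t0 x0 0 0 0 0 0 0 0"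
  by (simp_all add: numeral_eq_Suc pdxn_Suc) (induction n; simp add: pdxn_Suc)

lemma eqn1_jet_realization:
  "eqn1 A B C E F Q (jet_realization t0 x0 v a0 a1 a2 a3 a4 a5) t0 x0 =
     v + A t0 * a5 + B t0 * a3 + C t0 * a0 * a3 + E t0 * a0 * a1 + F t0 * a1 * a2 + Q t0 * a0"
  by (simp add: eqn1_def pdxn_jet_realization jet_realization_def)

lemma deriv_zero_imp_const:
  assumes "smooth (f::real \<Rightarrow> real)" and "\<And>y. deriv f y = 0"
  shows "f x = f y"
  using DERIV_isconst_all[of f x y] smooth_DERIV[OF assms(1)] assms(2) by metis

lemma deriv_const_imp_affine:
  assumes s: "smooth (f::real \<Rightarrow> real)" and d: "\<And>y. deriv f y = k"
  shows "f x = f 0 + k * x"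
proof -
  have "\<forall>y. DERIV (\<lambda>y. f y - k * y) y :> 0"
    using smooth_DERIV[OF s] d by (auto intro!: derivative_eq_intros)
  from DERIV_isconst_all[OF this, of x 0] show ?thesis by simp
qed

lemma deriv2_zero_imp_affine:
  assumes s: "smooth (f::real \<Rightarrow> real)" and d: "\<And>y. deriv (deriv f) y = 0"
  shows "f x = f 0 + x * (f 1 - f 0)"
proof -
  have "deriv f y = deriv f 0" for y
    using deriv_zero_imp_const[OF smooth_deriv[OF s] d] .
  hence "f z = f 0 + deriv f 0 * z" for z using deriv_const_imp_affine[OF s] by blast
  from this[of 1] this[of x] show ?thesis by (simp add: algebra_simps)
qed

lemma deriv_diff_const: "deriv (\<lambda>y. f y - c) = deriv (f::real\<Rightarrow>real)"
proof (rule ext)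
  fix y
  have "((\<lambda>y. f y - c) has_field_derivative D) (at y) \<longleftrightarrow> (f has_field_derivative D) (at y)" for D
  proof
    assume "((\<lambda>y. f y - c) has_field_derivative D) (at y)"
    from DERIV_add[OF this DERIV_const[of c]] show "(f has_field_derivative D) (at y)" by simp
  next
    assume "(f has_field_derivative D) (at y)"
    from DERIV_diff[OF this DERIV_const[of c]] show "((\<lambda>y. f y - c) has_field_derivative D) (at y)" by simp
  qed
  thus "deriv (\<lambda>y. f y - c) y = deriv f y" by (simp add: deriv_def)
qed

lemma higher_deriv_diff_const: "n \<ge> 1 \<Longrightarrow> (deriv ^^ n) (\<lambda>y. f y - c) = (deriv ^^ n) (f::real\<Rightarrow>real)"
  by (cases n) (simp_all add: funpow_Suc_right deriv_diff_const del: funpow.simps)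

lemma continuous_eq_off_0:
  fixes f g :: "real \<Rightarrow> real"
  assumes f: "continuous_on UNIV f" and g: "continuous_on UNIV g" and eq: "\<And>x. x \<noteq> 0 \<Longrightarrow> f x = g x"
  shows "f y = g y"
proof (cases "y = 0")
  case False thus ?thesis using eq by simp
next
  case True
  have "(f \<longlongrightarrow> f 0) (at 0)" using f continuous_on_eq_continuous_at[of UNIV f]
    by (simp add: isCont_def)
  moreover have "(g \<longlongrightarrow> g 0) (at 0)" using g continuous_on_eq_continuous_at[of UNIV g]
    by (simp add: isCont_def)
  moreover have "eventually (\<lambda>x. f x = g x) (at 0)"
    using eq by (auto simp: eventually_at_filter)
  ultimately have "(g \<longlongrightarrow> f 0) (at 0)" using Lim_transform_eventually by fastforce
  hence "f 0 = g 0" using \<open>(g \<longlongrightarrow> g 0) (at 0)\<close> tendsto_unique[of "at (0::real)"] by auto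
  thus ?thesis using True by simp
qed

abbreviation smooth_fun3 :: "fun3 \<Rightarrow> bool" where
  "smooth_fun3 F \<equiv> smooth (\<lambda>(t::real, x::real, u::real). F t x u)"

abbreviation smooth_fun9 :: "fun9 \<Rightarrow> bool" where
  "smooth_fun9 w \<equiv> smooth (\<lambda>(t::real, x::real, u::real, a::real, b::real, c::real, e::real, f::real, q::real).
     w t x u a b c e f q)"

lemma smooth_fun3_slices:
  assumes "smooth_fun3 F"
  shows "smooth (\<lambda>s. F s x u)" "smooth (\<lambda>y. F t y u)" "smooth (\<lambda>z. F t x z)"
    and "smooth (\<lambda>w. F t (fst w) (snd w))" "smooth (\<lambda>w. F (fst w) x (snd w))"
  using smooth_compose_affine[OF _ assms, of "\<lambda>y. (y, 0, 0)" "(0, x, u)"]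
    smooth_compose_affine[OF _ assms, of "\<lambda>y. (0, y, 0)" "(t, 0, u)"]
    smooth_compose_affine[OF _ assms, of "\<lambda>y. (0, 0, y)" "(t, x, 0)"]
    smooth_compose_affine[OF _ assms, of "\<lambda>w. (0, fst w, snd w)" "(t, 0, 0)"]
    smooth_compose_affine[OF _ assms, of "\<lambda>w. (fst w, 0, snd w)" "(0, x, 0)"]
  by (simp_all add: case_prod_beta bounded_linear_Pair bounded_linear_fst bounded_linear_snd
      bounded_linear_ident bounded_linear_zero)

lemma smooth_fun9_slices:
  assumes "smooth_fun9 w"
  shows "smooth (\<lambda>y. w t y u a b c e f q)" "smooth (\<lambda>z. w t x z a b c e f q)"
    and "smooth (\<lambda>y. w t x u y b c e f q)" "smooth (\<lambda>y. w t x u a b y e f q)"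
  using smooth_compose_affine[OF _ assms, of "\<lambda>y. (0, y, 0, 0, 0, 0, 0, 0, 0)" "(t, 0, u, a, b, c, e, f, q)"]
    smooth_compose_affine[OF _ assms, of "\<lambda>y. (0, 0, y, 0, 0, 0, 0, 0, 0)" "(t, x, 0, a, b, c, e, f, q)"]
    smooth_compose_affine[OF _ assms, of "\<lambda>y. (0, 0, 0, y, 0, 0, 0, 0, 0)" "(t, x, u, 0, b, c, e, f, q)"]
    smooth_compose_affine[OF _ assms, of "\<lambda>y. (0, 0, 0, 0, 0, y, 0, 0, 0)" "(t, x, u, a, b, 0, e, f, q)"]
  by (simp_all add: bounded_linear_Pair bounded_linear_ident bounded_linear_zero)

lemma smooth_fun9_eq_off_axes:
  fixes g :: "real \<Rightarrow> real \<Rightarrow> real"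
  assumes w: "smooth_fun9 w"
    and eq: "\<And>a c. a \<noteq> 0 \<Longrightarrow> c \<noteq> 0 \<Longrightarrow> w t x u a b c e f q = g a c"
    and "\<And>c. continuous_on UNIV (\<lambda>a. g a c)" "\<And>a. continuous_on UNIV (\<lambda>c. g a c)"
  shows "w t x u a b c e f q = g a c"
proof -
  have "w t x u a' b c' e f q = g a' c'" if "c' \<noteq> 0" for a' c'
    by (rule continuous_eq_off_0[OF smooth_continuous_on[OF smooth_fun9_slices(3)[OF w]] assms(3)])
      (rule eq[OF _ that])
  thus ?thesis
    by (rule continuous_eq_off_0[OF smooth_continuous_on[OF smooth_fun9_slices(4)[OF w]] assms(4)])
qed

locale tau_function_of_t =
  fixes tau xi eta :: "real \<Rightarrow> real \<Rightarrow> real \<Rightarrow> real" and \<alpha> :: "real \<Rightarrow> real"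
  assumes smooth_eta: "smooth_fun3 eta" and smooth_xi: "smooth_fun3 xi" and smooth_\<alpha>: "smooth \<alpha>"
    and tau_eq: "\<And>t x u. tau t x u = \<alpha> t"
begin

text \<open>\<open>D\<^sub>x\<^sup>n\<close> of \<open>\<eta> - \<xi> u\<^sub>x\<close> along the jet realisation at time \<open>t0\<close>; the
  remaining term \<open>\<tau> u\<^sub>t\<close> of the characteristic is constant in \<open>x\<close>.\<close>
definition W_xn :: "real \<Rightarrow> real \<Rightarrow> real \<Rightarrow> real \<Rightarrow> real \<Rightarrow> real \<Rightarrow> real \<Rightarrow> real \<Rightarrow> nat \<Rightarrow> real" where
  "W_xn t0 x0 a0 a1 a2 a3 a4 a5 n = (deriv_along_graph (taylor5 x0 a1 a2 a3 a4 a5 0) ^^ n)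
     (\<lambda>w. eta t0 (fst w) (snd w) - xi t0 (fst w) (snd w) * taylor5 x0 a1 a2 a3 a4 a5 0 (fst w)) (x0, a0)"

lemma eta_xn_jet_realization:
  assumes n: "n \<ge> 1"
  shows "eta_xn n tau xi eta (jet_realization t0 x0 v a0 a1 a2 a3 a4 a5) t0 x0 =
    W_xn t0 x0 a0 a1 a2 a3 a4 a5 n
      + xi t0 x0 a0 * pdxn (Suc n) (jet_realization t0 x0 v a0 a1 a2 a3 a4 a5) t0 x0"
proof -
  let ?u = "jet_realization t0 x0 v a0 a1 a2 a3 a4 a5"
  let ?P = "taylor5 x0 a0 a1 a2 a3 a4 a5" and ?P1 = "taylor5 x0 a1 a2 a3 a4 a5 0"
  define K where "K = (\<lambda>w. eta t0 (fst w) (snd w) - xi t0 (fst w) (snd w) * ?P1 (fst w))"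
  have sK: "smooth K" unfolding K_def
    by (intro smooth_diff smooth_mult smooth_fun3_slices(4)[OF smooth_eta]
        smooth_fun3_slices(4)[OF smooth_xi] smooth_compose_fst smooth_taylor5)
  have cw: "(\<lambda>y. charW tau xi eta ?u t0 y) = (\<lambda>y. K (y, ?P y) - \<alpha> t0 * v)"
    by (rule ext) (simp add: charW_def tau_eq K_def jet_realization_def algebra_simps)
  have "pdxn n (charW tau xi eta ?u) t0 x0 = (deriv ^^ n) (\<lambda>y. K (y, ?P y) - \<alpha> t0 * v) x0"
    by (simp add: pdxn_eq_deriv cw)
  also have "\<dots> = (deriv ^^ n) (\<lambda>y. K (y, ?P y)) x0" using higher_deriv_diff_const[OF n] by simp
  also have "\<dots> = W_xn t0 x0 a0 a1 a2 a3 a4 a5 n"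
    using higher_deriv_along_graph[OF sK smooth_taylor5, of ?P, OF has_real_derivative_taylor5]
    by (simp add: W_xn_def K_def)
  finally have 1: "pdxn n (charW tau xi eta ?u) t0 x0 = W_xn t0 x0 a0 a1 a2 a3 a4 a5 n" .
  obtain m where m: "n = Suc m" using n by (cases n) auto
  have 2: "pdxn n (pdt ?u) t0 x0 = 0" by (simp add: m pdxn_jet_realization(4) jet_realization_def taylor5_def)
  show ?thesis unfolding eta_xn_def 1 2 by simp
qed

lemma eta_t_jet_realization:
  "eta_t tau xi eta (jet_realization t0 x0 v a0 a1 a2 a3 a4 a5) t0 x0 =
     partial1 (\<lambda>w. eta (fst w) x0 (snd w)) (t0, a0) + partial2 (\<lambda>w. eta (fst w) x0 (snd w)) (t0, a0) * v
     - deriv \<alpha> t0 * v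
     - (partial1 (\<lambda>w. xi (fst w) x0 (snd w)) (t0, a0) + partial2 (\<lambda>w. xi (fst w) x0 (snd w)) (t0, a0) * v) * a1"
  (is "_ = ?D_eta - _ - ?D_xi * a1")
proof -
  have line: "((\<lambda>s. a0 + v * (s - t0)) has_real_derivative v) (at s)" for s
    by (auto intro!: derivative_eq_intros)
  have "((\<lambda>s. eta s x0 (a0 + v * (s - t0))) has_real_derivative ?D_eta) (at t0)"
    "((\<lambda>s. xi s x0 (a0 + v * (s - t0))) has_real_derivative ?D_xi) (at t0)"
    using partial_chain_rule[OF smooth_fun3_slices(5)[OF smooth_eta, of x0] DERIV_ident line, where s=t0]
      partial_chain_rule[OF smooth_fun3_slices(5)[OF smooth_xi, of x0] DERIV_ident line, where s=t0]
    by simp_all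
  then have "((\<lambda>s. eta s x0 (a0 + v * (s - t0)) - \<alpha> s * v - xi s x0 (a0 + v * (s - t0)) * a1)
      has_real_derivative ?D_eta - deriv \<alpha> t0 * v - ?D_xi * a1) (at t0)"
    by (intro DERIV_diff DERIV_cmult_right smooth_DERIV smooth_\<alpha>)
  moreover have "(\<lambda>s. charW tau xi eta (jet_realization t0 x0 v a0 a1 a2 a3 a4 a5) s x0)
      = (\<lambda>s. eta s x0 (a0 + v * (s - t0)) - \<alpha> s * v - xi s x0 (a0 + v * (s - t0)) * a1)"
    by (simp add: fun_eq_iff charW_def tau_eq jet_realization_def)
  ultimately show ?thesis
    by (simp add: eta_t_def pdt_def DERIV_imp_deriv jet_realization_def)
qed

lemma prY_eqn1_jet_realization:
  "prY_eqn1 tau xi eta w1 w2 w3 w4 w5 w6 A B C E F Q (jet_realization t0 x0 v a0 a1 a2 a3 a4 a5) t0 x0 =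
    (partial1 (\<lambda>w. eta (fst w) x0 (snd w)) (t0, a0) + partial2 (\<lambda>w. eta (fst w) x0 (snd w)) (t0, a0) * v
     - deriv \<alpha> t0 * v
     - (partial1 (\<lambda>w. xi (fst w) x0 (snd w)) (t0, a0) + partial2 (\<lambda>w. xi (fst w) x0 (snd w)) (t0, a0) * v) * a1)
    + w1 t0 x0 a0 (A t0) (B t0) (C t0) (E t0) (F t0) (Q t0) * a5
    + A t0 * W_xn t0 x0 a0 a1 a2 a3 a4 a5 5
    + w2 t0 x0 a0 (A t0) (B t0) (C t0) (E t0) (F t0) (Q t0) * a3
    + B t0 * (W_xn t0 x0 a0 a1 a2 a3 a4 a5 3 + xi t0 x0 a0 * a4)
    + w3 t0 x0 a0 (A t0) (B t0) (C t0) (E t0) (F t0) (Q t0) * a0 * a3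
    + C t0 * eta t0 x0 a0 * a3
    + C t0 * a0 * (W_xn t0 x0 a0 a1 a2 a3 a4 a5 3 + xi t0 x0 a0 * a4)
    + w4 t0 x0 a0 (A t0) (B t0) (C t0) (E t0) (F t0) (Q t0) * a0 * a1
    + E t0 * eta t0 x0 a0 * a1
    + E t0 * a0 * (W_xn t0 x0 a0 a1 a2 a3 a4 a5 1 + xi t0 x0 a0 * a2)
    + w5 t0 x0 a0 (A t0) (B t0) (C t0) (E t0) (F t0) (Q t0) * a1 * a2
    + F t0 * (W_xn t0 x0 a0 a1 a2 a3 a4 a5 1 + xi t0 x0 a0 * a2) * a2
    + F t0 * a1 * (W_xn t0 x0 a0 a1 a2 a3 a4 a5 2 + xi t0 x0 a0 * a3)
    + w6 t0 x0 a0 (A t0) (B t0) (C t0) (E t0) (F t0) (Q t0) * a0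
    + Q t0 * eta t0 x0 a0"
  using eta_xn_jet_realization[of 1] eta_xn_jet_realization[of 2] eta_xn_jet_realization[of 3]
    eta_xn_jet_realization[of 5]
  by (simp add: prY_eqn1_def Let_def eta_t_jet_realization pdxn_jet_realization jet_realization_def
      pdxn_Suc numeral_eq_Suc)

end

section \<open>Determining equations\<close>

locale inf_equiv_generator =
  fixes tau xi eta :: fun3 and w1 w2 w3 w4 w5 w6 :: fun9
  assumes smooth_tau: "smooth_fun3 tau" and smooth_xi: "smooth_fun3 xi"
    and smooth_eta: "smooth_fun3 eta"
    and smooth_w: "\<And>w. w \<in> {w1, w2, w3, w4, w5, w6} \<Longrightarrow> smooth_fun9 w"
    and invariant: "inf_equiv_transf tau xi eta w1 w2 w3 w4 w5 w6"
begin

lemma invariance_conditions: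
  assumes "smooth A" "smooth B" "smooth C" "smooth E" "smooth F" "smooth Q"
  shows "\<And>u t x. smooth (case_prod u) \<Longrightarrow> A t \<noteq> 0 \<Longrightarrow> C t \<noteq> 0 \<Longrightarrow>
           eqn1 A B C E F Q u t x = 0 \<Longrightarrow> prY_eqn1 tau xi eta w1 w2 w3 w4 w5 w6 A B C E F Q u t x = 0"
    and "\<And>t x u w theta. A t \<noteq> 0 \<Longrightarrow> C t \<noteq> 0 \<Longrightarrow>
           (w, theta) \<in> {(w1, A), (w2, B), (w3, C), (w4, E), (w5, F), (w6, Q)} \<Longrightarrow>
           om_x tau w theta A B C E F Q t x u = 0 \<and> om_u tau w theta A B C E F Q t x u = 0"
  using invariant[unfolded inf_equiv_transf_def, rule_format, OF conjI[OF assms(1) conjI[OF assms(2)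
      conjI[OF assms(3) conjI[OF assms(4) conjI[OF assms(5) assms(6)]]]]]]
  by (auto simp: case_prod_beta')

lemma w_derivs_vanish:
  assumes "a \<noteq> 0" "c \<noteq> 0" and w: "w \<in> {w1, w2, w3, w4, w5, w6}"
  shows "deriv (\<lambda>y. w t y u a b c e f q) x = 0 \<and> deriv (\<lambda>z. w t x z a b c e f q) u = 0"
proof -
  from w obtain th :: "real \<Rightarrow> real" where
    th: "(w, th) \<in> {(w1, \<lambda>_. a), (w2, \<lambda>_. b), (w3, \<lambda>_. c), (w4, \<lambda>_. e), (w5, \<lambda>_. f), (w6, \<lambda>_. q)}"
    and th_const: "\<exists>k. th = (\<lambda>_. k)"
    by blast
  have "om_x tau w th (\<lambda>_. a) (\<lambda>_. b) (\<lambda>_. c) (\<lambda>_. e) (\<lambda>_. f) (\<lambda>_. q) t x u = 0 \<and>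
        om_u tau w th (\<lambda>_. a) (\<lambda>_. b) (\<lambda>_. c) (\<lambda>_. e) (\<lambda>_. f) (\<lambda>_. q) t x u = 0"
    by (rule invariance_conditions(2)) (use assms(1,2) th in auto)
  with th_const show ?thesis by (auto simp: om_x_def om_u_def)
qed

lemma tau_derivs_vanish: "deriv (\<lambda>y. tau t y u) x = 0 \<and> deriv (\<lambda>z. tau t x z) u = 0"
proof -
  have "smooth (\<lambda>s. 1 + (s - t))" by (intro smooth_add smooth_diff smooth_const smooth_ident)
  from invariance_conditions(2)[OF this, of "\<lambda>_. 0" "\<lambda>_. 1" "\<lambda>_. 0" "\<lambda>_. 0" "\<lambda>_. 0" t w1]
  have "om_x tau w1 (\<lambda>s. 1 + (s - t)) (\<lambda>s. 1 + (s - t)) (\<lambda>_. 0) (\<lambda>_. 1) (\<lambda>_. 0) (\<lambda>_. 0) (\<lambda>_. 0) t x u = 0 \<and>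
        om_u tau w1 (\<lambda>s. 1 + (s - t)) (\<lambda>s. 1 + (s - t)) (\<lambda>_. 0) (\<lambda>_. 1) (\<lambda>_. 0) (\<lambda>_. 0) (\<lambda>_. 0) t x u = 0"
    by simp
  moreover have "deriv (\<lambda>s. 1 + (s - t)) t = 1"
    by (rule DERIV_imp_deriv) (auto intro!: derivative_eq_intros)
  ultimately show ?thesis
    using w_derivs_vanish[where a=1 and c=1 and w=w1 and b=0 and e=0 and f=0 and q=0]
    by (simp add: om_x_def om_u_def)
qed

definition \<alpha> :: "real \<Rightarrow> real" where "\<alpha> t = tau t 0 0"

lemma tau_eq: "tau t x u = \<alpha> t"
  using deriv_zero_imp_const[OF smooth_fun3_slices(2)[OF smooth_tau], of t u x 0]
    deriv_zero_imp_const[OF smooth_fun3_slices(3)[OF smooth_tau], of t 0 u 0] tau_derivs_vanish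
  by (simp add: \<alpha>_def)

lemma smooth_\<alpha>: "smooth \<alpha>"
  using smooth_fun3_slices(1)[OF smooth_tau, of 0 0] by (simp add: \<alpha>_def[abs_def])

lemma w_eq_at_origin:
  assumes "a \<noteq> 0" "c \<noteq> 0" and w: "w \<in> {w1, w2, w3, w4, w5, w6}"
  shows "w t x u a b c e f q = w t 0 0 a b c e f q"
  using deriv_zero_imp_const[OF smooth_fun9_slices(1)[OF smooth_w[OF w]], of t u a b c e f q x 0]
    deriv_zero_imp_const[OF smooth_fun9_slices(2)[OF smooth_w[OF w]], of t 0 a b c e f q u 0]
    w_derivs_vanish[OF assms]
  by simp

sublocale tau_function_of_t tau xi eta \<alpha>
  by unfold_locales (auto simp: smooth_eta smooth_xi smooth_\<alpha> tau_eq)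

lemma prY_eqn1_jet_vanishes:
  assumes "a \<noteq> 0" "c \<noteq> 0"
  shows "prY_eqn1 tau xi eta w1 w2 w3 w4 w5 w6 (\<lambda>_. a) (\<lambda>_. b) (\<lambda>_. c) (\<lambda>_. e) (\<lambda>_. f) (\<lambda>_. q)
    (jet_realization t x (- (a * uxxxxx + b * uxxx + c * u * uxxx + e * u * ux + f * ux * uxx + q * u))
       u ux uxx uxxx uxxxx uxxxxx) t x = 0"
  by (rule invariance_conditions(1)) (auto simp: eqn1_jet_realization assms)

lemmas W_xn_simps = W_xn_def deriv_along_graph_def numeral_eq_Suc
  smooth_fun3_slices(4)[OF smooth_eta] smooth_fun3_slices(4)[OF smooth_xi] smooth_taylor5
  smooth_add smooth_mult smooth_diff smooth_compose_fst smooth_partial1 smooth_partial2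

lemma partial_slices_eq_deriv:
  "partial1 (\<lambda>w. eta (fst w) x0 (snd w)) (t0, U) = deriv (\<lambda>s. eta s x0 U) t0"
  "partial2 (\<lambda>w. eta (fst w) x0 (snd w)) (t0, U) = deriv (\<lambda>z. eta t0 x0 z) U"
  "partial1 (\<lambda>w. eta t0 (fst w) (snd w)) (x0, U) = deriv (\<lambda>y. eta t0 y U) x0"
  "partial2 (\<lambda>w. eta t0 (fst w) (snd w)) (x0, U) = deriv (\<lambda>z. eta t0 x0 z) U"
  "partial1 (\<lambda>w. xi (fst w) x0 (snd w)) (t0, U) = deriv (\<lambda>s. xi s x0 U) t0"
  "partial2 (\<lambda>w. xi (fst w) x0 (snd w)) (t0, U) = deriv (\<lambda>z. xi t0 x0 z) U"
  "partial2 (\<lambda>w. xi t0 (fst w) (snd w)) (x0, U) = deriv (\<lambda>z. xi t0 x0 z) U"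
  using partial1_eq_deriv[OF smooth_fun3_slices(5)[OF smooth_eta, of x0], of t0 U]
    partial2_eq_deriv[OF smooth_fun3_slices(5)[OF smooth_eta, of x0], of t0 U]
    partial1_eq_deriv[OF smooth_fun3_slices(4)[OF smooth_eta, of t0], of x0 U]
    partial2_eq_deriv[OF smooth_fun3_slices(4)[OF smooth_eta, of t0], of x0 U]
    partial1_eq_deriv[OF smooth_fun3_slices(5)[OF smooth_xi, of x0], of t0 U]
    partial2_eq_deriv[OF smooth_fun3_slices(5)[OF smooth_xi, of x0], of t0 U]
    partial2_eq_deriv[OF smooth_fun3_slices(4)[OF smooth_xi, of t0], of x0 U]
  by simp_all

lemma determining_eq_B:
  "- s * partial2 (\<lambda>w. eta (fst w) x0 (snd w)) (t0, U) + s * deriv \<alpha> t0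
   + s * p * partial2 (\<lambda>w. xi (fst w) x0 (snd w)) (t0, U)
   + (w2 t0 x0 U 1 1 1 0 0 0 - w2 t0 x0 U 1 0 1 0 0 0) * s + W_xn t0 x0 U p 0 s 0 0 3
   + (w3 t0 x0 U 1 1 1 0 0 0 - w3 t0 x0 U 1 0 1 0 0 0) * U * s
   + (w4 t0 x0 U 1 1 1 0 0 0 - w4 t0 x0 U 1 0 1 0 0 0) * U * p
   + (w6 t0 x0 U 1 1 1 0 0 0 - w6 t0 x0 U 1 0 1 0 0 0) * U = 0"
  using prY_eqn1_jet_vanishes[where a=1 and b=1 and c=1 and e=0 and f=0 and q=0
      and u=U and ux=p and uxx=0 and uxxx=s and uxxxx=0 and uxxxxx=0 and t=t0 and x=x0]
    prY_eqn1_jet_vanishes[where a=1 and b=0 and c=1 and e=0 and f=0 and q=0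
      and u=U and ux=p and uxx=0 and uxxx=s and uxxxx=0 and uxxxxx=0 and t=t0 and x=x0]
  unfolding prY_eqn1_jet_realization by (simp add: algebra_simps)

lemma W_xn_3_mixed_difference:
  "W_xn t0 x0 U 1 0 1 0 0 3 - W_xn t0 x0 U 1 0 0 0 0 3 - W_xn t0 x0 U 0 0 1 0 0 3 + W_xn t0 x0 U 0 0 0 0 0 3
   = -4 * partial2 (\<lambda>w. xi t0 (fst w) (snd w)) (x0, U)"
  by (simp add: W_xn_simps algebra_simps)

lemma xi_u_vanishes: "deriv (\<lambda>z. xi t0 x0 z) U = 0"
proof -
  have "partial2 (\<lambda>w. xi (fst w) x0 (snd w)) (t0, U)
          - 4 * partial2 (\<lambda>w. xi t0 (fst w) (snd w)) (x0, U) = 0"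
    using determining_eq_B[of 1 x0 t0 U 1] determining_eq_B[of 0 x0 t0 U 1]
      determining_eq_B[of 1 x0 t0 U 0] determining_eq_B[of 0 x0 t0 U 0]
      W_xn_3_mixed_difference[of t0 x0 U] by (simp add: algebra_simps)
  thus ?thesis by (simp add: partial_slices_eq_deriv)
qed

lemma xi_indep_u: "xi t x u = xi t x 0"
  using deriv_zero_imp_const[OF smooth_fun3_slices(3)[OF smooth_xi], of t x u 0] xi_u_vanishes by blast

lemma partial_xi_indep_u [simp]:
  "smooth (\<lambda>w::real \<times> real. xi t0 (fst w) 0)"
  "partial1 (\<lambda>w. xi t0 (fst w) 0) = (\<lambda>w. deriv (\<lambda>y. xi t0 y 0) (fst w))"
  "partial2 (\<lambda>w. xi t0 (fst w) 0) = (\<lambda>w. 0)"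
  using smooth_compose_fst[OF smooth_fun3_slices(2)[OF smooth_xi, of t0 0]]
    partial_compose_fst[OF smooth_fun3_slices(2)[OF smooth_xi, of t0 0]] by simp_all

lemma W_xn_xi_indep_u:
  "W_xn t0 x0 a0 a1 a2 a3 a4 a5 n = (deriv_along_graph (taylor5 x0 a1 a2 a3 a4 a5 0) ^^ n)
     (\<lambda>w. eta t0 (fst w) (snd w) - xi t0 (fst w) 0 * taylor5 x0 a1 a2 a3 a4 a5 0 (fst w)) (x0, a0)"
  unfolding W_xn_def by (subst xi_indep_u) (rule refl)

lemma determining_eq_F:
  "p * W_xn t0 x0 U p 0 0 0 0 2
   + (w4 t0 x0 U 1 0 1 0 1 0 - w4 t0 x0 U 1 0 1 0 0 0) * U * p
   + (w6 t0 x0 U 1 0 1 0 1 0 - w6 t0 x0 U 1 0 1 0 0 0) * U = 0"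
  using prY_eqn1_jet_vanishes[where a=1 and b=0 and c=1 and e=0 and f=1 and q=0
      and u=U and ux=p and uxx=0 and uxxx=0 and uxxxx=0 and uxxxxx=0 and t=t0 and x=x0]
    prY_eqn1_jet_vanishes[where a=1 and b=0 and c=1 and e=0 and f=0 and q=0
      and u=U and ux=p and uxx=0 and uxxx=0 and uxxxx=0 and uxxxxx=0 and t=t0 and x=x0]
  unfolding prY_eqn1_jet_realization by (simp add: algebra_simps)

lemma W_xn_2_second_difference:
  "2 * W_xn t0 x0 U 2 0 0 0 0 2 - 3 * W_xn t0 x0 U 1 0 0 0 0 2 + W_xn t0 x0 U (-1) 0 0 0 0 2
   = 6 * partial2 (partial2 (\<lambda>w. eta t0 (fst w) (snd w))) (x0, U)"
  unfolding W_xn_xi_indep_u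
  by (simp add: W_xn_simps smooth_fun3_slices(2)[OF smooth_xi] smooth_deriv algebra_simps)

lemma eta_uu_vanishes: "deriv (\<lambda>z. deriv (\<lambda>z'. eta t0 x0 z') z) U = 0"
proof -
  have "partial2 (partial2 (\<lambda>w. eta t0 (fst w) (snd w))) (x0, U) = 0"
    using determining_eq_F[of 2 t0 x0 U] determining_eq_F[of 1 t0 x0 U] determining_eq_F[of 0 t0 x0 U]
      determining_eq_F[of "-1" t0 x0 U] W_xn_2_second_difference[of t0 x0 U]
    by (simp only: ring_distribs mult_zero_left mult_1_left mult_minus_left; linarith)
  moreover have "partial2 (partial2 (\<lambda>w. eta t0 (fst w) (snd w))) (x0, U)
      = deriv (\<lambda>z. partial2 (\<lambda>w. eta t0 (fst w) (snd w)) (x0, z)) U"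
    using partial2_eq_deriv[OF smooth_partial2[OF smooth_fun3_slices(4)[OF smooth_eta, of t0]], of x0 U]
    by simp
  ultimately show ?thesis by (simp add: partial_slices_eq_deriv)
qed

lemma eta_affine_in_u: "eta t x u = eta t x 0 + u * (eta t x 1 - eta t x 0)"
  using deriv2_zero_imp_affine[OF smooth_fun3_slices(3)[OF smooth_eta, of t x], of u] eta_uu_vanishes
  by simp

lemma determining_eq_E:
  "- U * p * partial2 (\<lambda>w. eta (fst w) x0 (snd w)) (t0, U) + U * p * deriv \<alpha> t0
   + U * p * p * partial2 (\<lambda>w. xi (fst w) x0 (snd w)) (t0, U)
   + (w4 t0 x0 U 1 0 1 1 0 0 - w4 t0 x0 U 1 0 1 0 0 0) * U * p + eta t0 x0 U * p
   + U * W_xn t0 x0 U p 0 0 0 0 1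
   + (w6 t0 x0 U 1 0 1 1 0 0 - w6 t0 x0 U 1 0 1 0 0 0) * U = 0"
  using prY_eqn1_jet_vanishes[where a=1 and b=0 and c=1 and e=1 and f=0 and q=0
      and u=U and ux=p and uxx=0 and uxxx=0 and uxxxx=0 and uxxxxx=0 and t=t0 and x=x0]
    prY_eqn1_jet_vanishes[where a=1 and b=0 and c=1 and e=0 and f=0 and q=0
      and u=U and ux=p and uxx=0 and uxxx=0 and uxxxx=0 and uxxxxx=0 and t=t0 and x=x0]
  unfolding prY_eqn1_jet_realization by (simp add: algebra_simps)

lemma W_xn_1:
  "W_xn t0 x0 U p 0 0 0 0 1 = partial1 (\<lambda>w. eta t0 (fst w) (snd w)) (x0, U)
     + partial2 (\<lambda>w. eta t0 (fst w) (snd w)) (x0, U) * p - deriv (\<lambda>y. xi t0 y 0) x0 * p"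
  unfolding W_xn_xi_indep_u by (simp add: W_xn_simps algebra_simps)

definition dw4_dE :: "real \<Rightarrow> real" where "dw4_dE t = w4 t 0 0 1 0 1 1 0 0 - w4 t 0 0 1 0 1 0 0 0"
definition dw6_dE :: "real \<Rightarrow> real" where "dw6_dE t = w6 t 0 0 1 0 1 1 0 0 - w6 t 0 0 1 0 1 0 0 0"

lemma determining_eq_E_reduced:
  "U * p * deriv \<alpha> t0 + dw4_dE t0 * U * p + eta t0 x0 U * p
   + U * (deriv (\<lambda>y. eta t0 y U) x0 - deriv (\<lambda>y. xi t0 y 0) x0 * p) + dw6_dE t0 * U = 0"
proof -
  have "w4 t0 x0 U 1 0 1 e 0 0 = w4 t0 0 0 1 0 1 e 0 0"
    and "w6 t0 x0 U 1 0 1 e 0 0 = w6 t0 0 0 1 0 1 e 0 0" for e :: real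
    using w_eq_at_origin[where a=1 and c=1 and t=t0 and x=x0 and u=U and b=0 and e=e and f=0 and q=0]
    by simp_all
  thus ?thesis using determining_eq_E[of U p x0 t0] unfolding W_xn_1 partial_slices_eq_deriv
    by (simp add: xi_u_vanishes dw4_dE_def dw6_dE_def algebra_simps)
qed

lemma eta_u0: "eta t x 0 = 0"
  using determining_eq_E_reduced[of 0 1 t x] by simp

lemma eta_linear_in_u: "eta t x u = u * eta t x 1"
  using eta_affine_in_u[of t x u] eta_u0 by simp

lemma eta_x_vanishes: "deriv (\<lambda>y. eta t0 y 1) x0 = 0"
proof -
  have "deriv (\<lambda>y. eta t0 y 1) x0 + dw6_dE t0 = 0" "deriv (\<lambda>y. eta t0 y 2) x0 + dw6_dE t0 = 0"
    using determining_eq_E_reduced[of 1 0 t0 x0] determining_eq_E_reduced[of 2 0 t0 x0] by simp_all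
  moreover have "deriv (\<lambda>y. eta t0 y 2) x0 = 2 * deriv (\<lambda>y. eta t0 y 1) x0"
    unfolding eta_linear_in_u[of t0 _ 2]
    by (rule DERIV_imp_deriv) (intro DERIV_cmult smooth_DERIV smooth_fun3_slices(2)[OF smooth_eta])
  ultimately show ?thesis by simp
qed

definition eta_u :: "real \<Rightarrow> real" where "eta_u t = eta t 0 1"

lemma eta_eq_u_eta_u: "eta t x u = u * eta_u t"
  using eta_linear_in_u[of t x u] eta_x_vanishes
    deriv_zero_imp_const[OF smooth_fun3_slices(2)[OF smooth_eta, of t 1], of x 0]
  by (simp add: eta_u_def)

lemma smooth_eta_u: "smooth eta_u"
  using smooth_fun3_slices(1)[OF smooth_eta, of 0 1] by (simp add: eta_u_def[abs_def])

lemma xi_x_eq: "deriv (\<lambda>y. xi t0 y 0) x0 = deriv \<alpha> t0 + dw4_dE t0 + eta_u t0"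
  using determining_eq_E_reduced[of 1 1 t0 x0] determining_eq_E_reduced[of 1 0 t0 x0]
    eta_eq_u_eta_u[of t0 x0 1] by simp

lemma xi_affine_in_x: "xi t x u = xi t 0 0 + deriv (\<lambda>y. xi t y 0) 0 * x"
proof -
  have "deriv (\<lambda>y. xi t y 0) y = deriv (\<lambda>y. xi t y 0) 0" for y
    using xi_x_eq[of t y] xi_x_eq[of t 0] by simp
  from deriv_const_imp_affine[OF smooth_fun3_slices(2)[OF smooth_xi, of t 0] this, of x] xi_indep_u[of t x u]
  show ?thesis by simp
qed

lemma W_xn_5_affine:
  "W_xn t0 x0 0 1 0 0 0 0 5 = 0"
proof -
  have "(\<lambda>w. eta t0 (fst w) (snd w) - xi t0 (fst w) (snd w) * taylor5 x0 1 0 0 0 0 0 (fst w)) =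
        (\<lambda>w. snd w * eta_u t0 - (xi t0 0 0 + deriv (\<lambda>y. xi t0 y 0) 0 * fst w))"
    by (simp add: fun_eq_iff eta_eq_u_eta_u xi_affine_in_x[of t0 _ "snd _"])
  thus ?thesis unfolding W_xn_def
    by (simp add: deriv_along_graph_def numeral_eq_Suc smooth_add smooth_mult smooth_diff smooth_partial1
        smooth_partial2)
qed

lemma xi_t_vanishes: "deriv (\<lambda>s. xi s x0 0) t0 = 0"
  using prY_eqn1_jet_vanishes[where a=1 and b=0 and c=1 and e=0 and f=0 and q=0
      and u=0 and ux=1 and uxx=0 and uxxx=0 and uxxxx=0 and uxxxxx=0 and t=t0 and x=x0]
  unfolding prY_eqn1_jet_realization partial_slices_eq_deriv W_xn_5_affine
  by (simp add: eta_u0)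

definition c1 :: real where "c1 = deriv (\<lambda>y. xi 0 y 0) 0"
definition c2 :: real where "c2 = xi 0 0 0"
definition r :: "real \<Rightarrow> real" where "r t = eta_u t - c1 / 2"

lemma xi_eq: "xi t x u = c1 * x + c2"
proof -
  have "xi t x u = xi 0 x 0"
    using xi_indep_u deriv_zero_imp_const[OF smooth_fun3_slices(1)[OF smooth_xi, of x 0], of t 0]
      xi_t_vanishes by metis
  thus ?thesis using xi_affine_in_x[of 0 x 0] by (simp add: c1_def c2_def)
qed

lemma smooth_r: "smooth r"
  unfolding r_def[abs_def] using smooth_eta_u by (intro smooth_diff smooth_const)

lemma eta_eq: "eta t x u = c1 / 2 * u + r t * u"
  by (simp add: eta_eq_u_eta_u r_def algebra_simps)

sublocale G: generator_point_form \<alpha> r c1 c2 tau xi eta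
  by unfold_locales (auto simp: smooth_\<alpha> smooth_r tau_eq xi_eq eta_eq)

lemma determining_eq_w:
  assumes "a \<noteq> 0" "c \<noteq> 0"
  shows "(w1 t x u a b c e f q - (5 * c1 * a - deriv \<alpha> t * a)) * uxxxxx
    + (w2 t x u a b c e f q - (3 * c1 * b - deriv \<alpha> t * b)) * uxxx
    + (w3 t x u a b c e f q - (5 / 2 * c1 * c - deriv \<alpha> t * c - r t * c)) * u * uxxx
    + (w4 t x u a b c e f q - (c1 / 2 * e - deriv \<alpha> t * e - r t * e)) * u * ux
    + (w5 t x u a b c e f q - (5 / 2 * c1 * f - deriv \<alpha> t * f - r t * f)) * ux * uxx
    + (w6 t x u a b c e f q - (- deriv \<alpha> t * q - deriv r t)) * u = 0"
proof -
  define v where "v = - (a * uxxxxx + b * uxxx + c * u * uxxx + e * u * ux + f * ux * uxx + q * u)"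
  have "eqn1 (\<lambda>_. a) (\<lambda>_. b) (\<lambda>_. c) (\<lambda>_. e) (\<lambda>_. f) (\<lambda>_. q)
      (jet_realization t x v u ux uxx uxxx 0 uxxxxx) t x = 0"
    by (simp add: eqn1_jet_realization v_def)
  with prY_eqn1_jet_vanishes[OF assms, where t=t and x=x and b=b and e=e and f=f and q=q
      and u=u and ux=ux and uxx=uxx and uxxx=uxxx and uxxxx=0 and uxxxxx=uxxxxx, folded v_def] show ?thesis
    unfolding G.prY_eqn1_eq[OF smooth_jet_realization]
    by (simp add: pdxn_jet_realization jet_realization_def)
qed

lemma w_eq_off_axes:
  assumes a: "a \<noteq> 0" and c: "c \<noteq> 0"
  shows "w1 t x u a b c e f q = 5 * c1 * a - deriv \<alpha> t * a"
    "w2 t x u a b c e f q = 3 * c1 * b - deriv \<alpha> t * b"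
    "w3 t x u a b c e f q = 5 / 2 * c1 * c - deriv \<alpha> t * c - r t * c"
    "w4 t x u a b c e f q = c1 / 2 * e - deriv \<alpha> t * e - r t * e"
    "w5 t x u a b c e f q = 5 / 2 * c1 * f - deriv \<alpha> t * f - r t * f"
    "w6 t x u a b c e f q = - deriv \<alpha> t * q - deriv r t"
proof -
  have origin: "w t x u a b c e f q = w t 0 0 a b c e f q"
    if "w \<in> {w1, w2, w3, w4, w5, w6}" for w x u
    using w_eq_at_origin[OF a c that] .
  note eq = determining_eq_w[OF a c, where t=t and x=0 and b=b and e=e and f=f and q=q]
  have w6: "w6 t 0 0 a b c e f q = - deriv \<alpha> t * q - deriv r t"
    using eq[where u=1 and ux=0 and uxx=0 and uxxx=0 and uxxxxx=0] origin[of w6 0 1] by simp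
  have w2: "w2 t 0 0 a b c e f q = 3 * c1 * b - deriv \<alpha> t * b"
    using eq[where u=0 and ux=0 and uxx=0 and uxxx=1 and uxxxxx=0] by simp
  show "w1 t x u a b c e f q = 5 * c1 * a - deriv \<alpha> t * a"
    using eq[where u=0 and ux=0 and uxx=0 and uxxx=0 and uxxxxx=1] origin[of w1 x u] by simp
  show "w2 t x u a b c e f q = 3 * c1 * b - deriv \<alpha> t * b"
    using w2 origin[of w2 x u] by simp
  show "w3 t x u a b c e f q = 5 / 2 * c1 * c - deriv \<alpha> t * c - r t * c"
    using eq[where u=1 and ux=0 and uxx=0 and uxxx=1 and uxxxxx=0] w2 w6 origin[of w2 0 1]
      origin[of w3 0 1] origin[of w6 0 1] origin[of w3 x u] by simp
  show "w4 t x u a b c e f q = c1 / 2 * e - deriv \<alpha> t * e - r t * e"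
    using eq[where u=1 and ux=1 and uxx=0 and uxxx=0 and uxxxxx=0] w6 origin[of w4 0 1]
      origin[of w6 0 1] origin[of w4 x u] by simp
  show "w5 t x u a b c e f q = 5 / 2 * c1 * f - deriv \<alpha> t * f - r t * f"
    using eq[where u=0 and ux=1 and uxx=1 and uxxx=0 and uxxxxx=0] origin[of w5 x u] by simp
  show "w6 t x u a b c e f q = - deriv \<alpha> t * q - deriv r t"
    using w6 origin[of w6 x u] by simp
qed

lemma w_eq:
  "w1 t x u A B C E F Q = 5 * c1 * A - deriv \<alpha> t * A"
  "w2 t x u A B C E F Q = 3 * c1 * B - deriv \<alpha> t * B"
  "w3 t x u A B C E F Q = 5 / 2 * c1 * C - deriv \<alpha> t * C - r t * C"
  "w4 t x u A B C E F Q = c1 / 2 * E - deriv \<alpha> t * E - r t * E"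
  "w5 t x u A B C E F Q = 5 / 2 * c1 * F - deriv \<alpha> t * F - r t * F"
  "w6 t x u A B C E F Q = - deriv \<alpha> t * Q - deriv r t"
proof -
  note extend = smooth_fun9_eq_off_axes[OF smooth_w,
      where t=t and x=x and u=u and b=B and e=E and f=F and q=Q]
  show "w1 t x u A B C E F Q = 5 * c1 * A - deriv \<alpha> t * A"
    by (rule extend[where g="\<lambda>A C. 5 * c1 * A - deriv \<alpha> t * A"])
      (auto simp: w_eq_off_axes intro!: continuous_intros)
  show "w2 t x u A B C E F Q = 3 * c1 * B - deriv \<alpha> t * B"
    by (rule extend[where g="\<lambda>A C. 3 * c1 * B - deriv \<alpha> t * B"])
      (auto simp: w_eq_off_axes intro!: continuous_intros)
  show "w3 t x u A B C E F Q = 5 / 2 * c1 * C - deriv \<alpha> t * C - r t * C"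
    by (rule extend[where g="\<lambda>A C. 5 / 2 * c1 * C - deriv \<alpha> t * C - r t * C"])
      (auto simp: w_eq_off_axes intro!: continuous_intros)
  show "w4 t x u A B C E F Q = c1 / 2 * E - deriv \<alpha> t * E - r t * E"
    by (rule extend[where g="\<lambda>A C. c1 / 2 * E - deriv \<alpha> t * E - r t * E"])
      (auto simp: w_eq_off_axes intro!: continuous_intros)
  show "w5 t x u A B C E F Q = 5 / 2 * c1 * F - deriv \<alpha> t * F - r t * F"
    by (rule extend[where g="\<lambda>A C. 5 / 2 * c1 * F - deriv \<alpha> t * F - r t * F"])
      (auto simp: w_eq_off_axes intro!: continuous_intros)
  show "w6 t x u A B C E F Q = - deriv \<alpha> t * Q - deriv r t"
    by (rule extend[where g="\<lambda>A C. - deriv \<alpha> t * Q - deriv r t"])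
      (auto simp: w_eq_off_axes intro!: continuous_intros)
qed

lemma equivalence_generator_form_holds:
  "equivalence_generator_form tau xi eta w1 w2 w3 w4 w5 w6 c1 c2 \<alpha> r"
  by (simp add: equivalence_generator_form_def smooth_\<alpha> smooth_r tau_eq xi_eq eta_eq w_eq)

end

theorem mainTheorem1:
  fixes tau xi eta :: "real \<Rightarrow> real \<Rightarrow> real \<Rightarrow> real"
    and w1 w2 w3 w4 w5 w6 :: "real \<Rightarrow> real \<Rightarrow> real \<Rightarrow> real \<Rightarrow> real \<Rightarrow> real \<Rightarrow> real \<Rightarrow> real \<Rightarrow> real \<Rightarrow> real"
  assumes "smooth (\<lambda>(t::real, x::real, u::real). tau t x u)"
    and "smooth (\<lambda>(t::real, x::real, u::real). xi t x u)"
    and "smooth (\<lambda>(t::real, x::real, u::real). eta t x u)"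
    and "\<forall>w \<in> {w1, w2, w3, w4, w5, w6}.
           smooth (\<lambda>(t::real, x::real, u::real, a::real, b::real, c::real, e::real, f::real, q::real).
                      w t x u a b c e f q)"
  shows "inf_equiv_transf tau xi eta w1 w2 w3 w4 w5 w6 \<longleftrightarrow>
    (\<exists>(c1::real) (c2::real) (\<alpha>::real \<Rightarrow> real) (r::real \<Rightarrow> real). smooth \<alpha> \<and> smooth r \<and>
       (\<forall>t x u A B C E F Q.
          tau t x u = \<alpha> t \<and>
          xi t x u = c1 * x + c2 \<and>
          eta t x u = c1 / 2 * u + r t * u \<and>
          w1 t x u A B C E F Q = 5 * c1 * A - deriv \<alpha> t * A \<and>
          w2 t x u A B C E F Q = 3 * c1 * B - deriv \<alpha> t * B \<and>
          w3 t x u A B C E F Q = 5 / 2 * c1 * C - deriv \<alpha> t * C - r t * C \<and>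
          w4 t x u A B C E F Q = c1 / 2 * E - deriv \<alpha> t * E - r t * E \<and>
          w5 t x u A B C E F Q = 5 / 2 * c1 * F - deriv \<alpha> t * F - r t * F \<and>
          w6 t x u A B C E F Q = - deriv \<alpha> t * Q - deriv r t))"
proof -
  have "inf_equiv_transf tau xi eta w1 w2 w3 w4 w5 w6 \<longleftrightarrow>
    (\<exists>c1 c2 \<alpha> r. equivalence_generator_form tau xi eta w1 w2 w3 w4 w5 w6 c1 c2 \<alpha> r)"
  proof
    assume "inf_equiv_transf tau xi eta w1 w2 w3 w4 w5 w6"
    with assms interpret inf_equiv_generator tau xi eta w1 w2 w3 w4 w5 w6
      by unfold_locales auto
    show "\<exists>c1 c2 \<alpha> r. equivalence_generator_form tau xi eta w1 w2 w3 w4 w5 w6 c1 c2 \<alpha> r"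
      using equivalence_generator_form_holds by blast
  qed (blast intro: inf_equiv_transf_if_generator_form)
  thus ?thesis by (simp only: equivalence_generator_form_def)
qed

end
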